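(* If a graph $G$ has a $(w,p)$-good tree decomposition, then the layered pathwidth of $G$ is at most $w(p+1)(w+1)$.
   Context: A tree decomposition of $G$ is a family $(B_x\subseteq V(G): x\in V(T))$ indexed by the nodes of a tree $T$ such that each edge of $G$ has both endpoints in some bag and, for each $v\in V(G)$, the nodes $x$ with $v\in B_x$ induce a non-empty connected subtree $T[v]$ of $T$; its width is the maximum bag size minus 1. A path decomposition is a tree decomposition indexed by a path; pathwidth $\operatorname{pw}$ is the minimum width of a path decomposition. A tree decomposition is $(w,p)$-good if its width is at most $w$ and $\operatorname{pw}(T[v])\le p$ for every $v\in V(G)$. A layering of $G$ is a partition $(V_0,\dots,V_t)$ of $V(G)$ such that every edge joins vertices in the same or consecutive layers. The layered width of a path decomposition is the minimum $\ell$ such that for some layering each bag contains at most $\ell$ vertices of each layer; the layered pathwidth of $G$ is the minimum layered width over path decompositions of $G$. *)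

theory Defs
  imports Main
begin

definition graph :: "'a set \<Rightarrow> 'a set set \<Rightarrow> bool" where
  "graph V E \<longleftrightarrow> finite V \<and> (\<forall>e\<in>E. card e = 2 \<and> e \<subseteq> V)"

definition connected_in :: "'a set set \<Rightarrow> 'a set \<Rightarrow> bool" where
  "connected_in E S \<longleftrightarrow>
     (\<forall>u\<in>S. \<forall>v\<in>S. (u, v) \<in> {(x, y). {x, y} \<in> E \<and> x \<in> S \<and> y \<in> S}\<^sup>*)"

text \<open>A tree: a finite nonempty connected graph with |N| - 1 edges (i.e. connected and acyclic).\<close>
definition tree :: "'b set \<Rightarrow> 'b set set \<Rightarrow> bool" where
  "tree N F \<longleftrightarrow> graph N F \<and> N \<noteq> {} \<and> connected_in F N \<and> card F = card N - 1"

definition tree_decomposition ::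
  "'a set \<Rightarrow> 'a set set \<Rightarrow> 'b set \<Rightarrow> 'b set set \<Rightarrow> ('b \<Rightarrow> 'a set) \<Rightarrow> bool" where
  "tree_decomposition V E N F B \<longleftrightarrow>
     tree N F \<and> (\<forall>x\<in>N. B x \<subseteq> V) \<and>
     (\<forall>e\<in>E. \<exists>x\<in>N. e \<subseteq> B x) \<and>
     (\<forall>v\<in>V. {x\<in>N. v \<in> B x} \<noteq> {} \<and> connected_in F {x\<in>N. v \<in> B x})"

text \<open>Path decomposition: a tree decomposition indexed by a path, given as the
  nonempty list of bags in path order (each vertex occupies a nonempty contiguous interval).\<close>
definition path_decomposition :: "'a set \<Rightarrow> 'a set set \<Rightarrow> 'a set list \<Rightarrow> bool" where
  "path_decomposition V E Ps \<longleftrightarrow>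
     Ps \<noteq> [] \<and> (\<forall>X\<in>set Ps. X \<subseteq> V) \<and>
     (\<forall>e\<in>E. \<exists>X\<in>set Ps. e \<subseteq> X) \<and>
     (\<forall>v\<in>V. (\<exists>X\<in>set Ps. v \<in> X) \<and>
        (\<forall>i j k. i \<le> j \<and> j \<le> k \<and> k < length Ps \<and> v \<in> Ps ! i \<and> v \<in> Ps ! k
                  \<longrightarrow> v \<in> Ps ! j))"

definition pathwidth_le :: "'a set \<Rightarrow> 'a set set \<Rightarrow> nat \<Rightarrow> bool" where
  "pathwidth_le V E k \<longleftrightarrow>
     (\<exists>Ps. path_decomposition V E Ps \<and> (\<forall>X\<in>set Ps. card X \<le> k + 1))"

definition subtree_of :: "'b set \<Rightarrow> 'b set set \<Rightarrow> ('b \<Rightarrow> 'a set) \<Rightarrow> 'a \<Rightarrow> 'b set \<times> 'b set set" where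
  "subtree_of N F B v = ({x\<in>N. v \<in> B x}, {e\<in>F. e \<subseteq> {x\<in>N. v \<in> B x}})"

definition good_tree_decomposition ::
  "nat \<Rightarrow> nat \<Rightarrow> 'a set \<Rightarrow> 'a set set \<Rightarrow> 'b set \<Rightarrow> 'b set set \<Rightarrow> ('b \<Rightarrow> 'a set) \<Rightarrow> bool" where
  "good_tree_decomposition w p V E N F B \<longleftrightarrow>
     tree_decomposition V E N F B \<and> (\<forall>x\<in>N. card (B x) \<le> w + 1) \<and>
     (\<forall>v\<in>V. pathwidth_le (fst (subtree_of N F B v)) (snd (subtree_of N F B v)) p)"

text \<open>A layering, given by the layer index of each vertex (V_i = {v. f v = i}).\<close>
definition layering :: "'a set set \<Rightarrow> ('a \<Rightarrow> nat) \<Rightarrow> bool" where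
  "layering E f \<longleftrightarrow> (\<forall>u v. {u, v} \<in> E \<longrightarrow> f u \<le> f v + 1 \<and> f v \<le> f u + 1)"

definition layered_pathwidth_le :: "'a set \<Rightarrow> 'a set set \<Rightarrow> nat \<Rightarrow> bool" where
  "layered_pathwidth_le V E l \<longleftrightarrow>
     (\<exists>Ps f. path_decomposition V E Ps \<and> layering E f \<and>
        (\<forall>X\<in>set Ps. \<forall>i. card {v\<in>X. f v = i} \<le> l))"

end

(*
  Cut the tree of the decomposition recursively into pieces: a piece is a subtree C meeting the
  rest of the tree only at a node c, such that the vertices living both inside and outside C
  form a set S \<subseteq> B c of at most w vertices. The core of C consists of c and the subtrees
  T[u] \<inter> C for u \<in> S; these have pathwidth at most p and share the node c, so the core has a
  path decomposition with at most w (p + 1) nodes per bag. The vertices meeting the core form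
  layer l. Every component D of C minus the core hangs off the core by a single tree edge,
  so it is again a piece, separated by at most w vertices of the bag at that edge; it is laid
  out recursively from layer l + 1 and its decomposition is spliced in next to a core bag
  containing the attachment node. In a spliced bag H \<union> Q, layer l is covered by the bags of H
  and every other layer by the bags of at most w (p + 1) nodes of Q. Replacing every node by
  its bag of at most w + 1 vertices gives the required path decomposition of the graph.
*)

theory Submission
  imports Defs
begin

section \<open>Walks in induced subgraphs\<close>

definition adj :: "'b set set \<Rightarrow> 'b set \<Rightarrow> ('b \<times> 'b) set" where
  "adj F K = {(x, y). {x, y} \<in> F \<and> x \<in> K \<and> y \<in> K}"

lemma adjI: "{x, y} \<in> F \<Longrightarrow> x \<in> K \<Longrightarrow> y \<in> K \<Longrightarrow> (x, y) \<in> adj F K"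
  by (simp add: adj_def)

lemma connected_in_adj: "connected_in F K \<longleftrightarrow> (\<forall>u\<in>K. \<forall>v\<in>K. (u, v) \<in> (adj F K)\<^sup>*)"
  unfolding connected_in_def adj_def by simp

lemma adj_rtrancl_sym: "(x, y) \<in> (adj F K)\<^sup>* \<Longrightarrow> (y, x) \<in> (adj F K)\<^sup>*"
proof -
  have "sym (adj F K)"
    unfolding adj_def sym_def by (auto simp: insert_commute)
  then show "(x, y) \<in> (adj F K)\<^sup>* \<Longrightarrow> (y, x) \<in> (adj F K)\<^sup>*"
    using sym_rtrancl symD by metis
qed

lemma adj_mono: "K \<subseteq> K' \<Longrightarrow> F \<subseteq> F' \<Longrightarrow> adj F K \<subseteq> adj F' K'"
  unfolding adj_def by auto

lemma adj_rtrancl_mono: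
  "(x, y) \<in> (adj F K)\<^sup>* \<Longrightarrow> K \<subseteq> K' \<Longrightarrow> F \<subseteq> F' \<Longrightarrow> (x, y) \<in> (adj F' K')\<^sup>*"
  using rtrancl_mono[OF adj_mono] by blast

lemma adj_rtrancl_endpoints: "(x, y) \<in> (adj F K)\<^sup>* \<Longrightarrow> x = y \<or> (x \<in> K \<and> y \<in> K)"
  by (induction rule: rtrancl_induct) (auto simp: adj_def)

lemma adj_rtrancl_exit:
  assumes "(x, y) \<in> (adj F K)\<^sup>*" "x \<in> M"
  shows "(x, y) \<in> (adj F (K \<inter> M))\<^sup>* \<or>
         (\<exists>a b. {a, b} \<in> F \<and> a \<in> K \<inter> M \<and> b \<in> K - M \<and> (x, a) \<in> (adj F (K \<inter> M))\<^sup>*)"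
  using assms(1)
proof (induction rule: rtrancl_induct)
  case (step y z)
  have e: "{y, z} \<in> F" "y \<in> K" "z \<in> K" using step.hyps(2) by (auto simp: adj_def)
  show ?case
  proof (cases "(x, y) \<in> (adj F (K \<inter> M))\<^sup>*")
    case True
    then have "y \<in> M" using adj_rtrancl_endpoints[OF True] assms(2) by blast
    show ?thesis
    proof (cases "z \<in> M")
      case True
      then have "(y, z) \<in> adj F (K \<inter> M)" using e \<open>y \<in> M\<close> by (simp add: adjI)
      then show ?thesis using \<open>(x, y) \<in> (adj F (K \<inter> M))\<^sup>*\<close> by (meson rtrancl_into_rtrancl)
    next
      case False
      then show ?thesis using True e \<open>y \<in> M\<close> by blast
    qed
  next
    case False
    then show ?thesis using step.IH by blast
  qed
qed simp

lemma connected_in_Union: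
  assumes "\<And>X. X \<in> A \<Longrightarrow> connected_in F X" "\<And>X. X \<in> A \<Longrightarrow> z \<in> X"
  shows "connected_in F (\<Union>A)"
proof -
  have to_z: "(u, z) \<in> (adj F (\<Union>A))\<^sup>*" if u: "u \<in> \<Union>A" for u
  proof -
    obtain X where "X \<in> A" "u \<in> X" using u by blast
    then have "(u, z) \<in> (adj F X)\<^sup>*" using assms unfolding connected_in_adj by blast
    then show ?thesis using adj_rtrancl_mono \<open>X \<in> A\<close> by (meson Union_upper order_refl)
  qed
  show ?thesis
    unfolding connected_in_adj by (meson to_z adj_rtrancl_sym rtrancl_trans)
qed

section \<open>Connected components\<close>

definition component :: "'b set set \<Rightarrow> 'b set \<Rightarrow> 'b \<Rightarrow> 'b set" where
  "component F K x = {y \<in> K. (x, y) \<in> (adj F K)\<^sup>*}"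

lemma component_self: "x \<in> K \<Longrightarrow> x \<in> component F K x"
  unfolding component_def by simp

lemma component_subset: "component F K x \<subseteq> K"
  unfolding component_def by auto

lemma Union_components: "\<Union>(component F K ` K) = K"
  using component_self component_subset by fastforce

lemma component_adj_rtrancl:
  assumes "(x, y) \<in> (adj F K)\<^sup>*" "x \<in> K"
  shows "(x, y) \<in> (adj F (component F K x))\<^sup>*"
  using assms(1)
proof (induction rule: rtrancl_induct)
  case (step y z)
  have yz: "{y, z} \<in> F" "y \<in> K" "z \<in> K" using step.hyps(2) by (auto simp: adj_def)
  have "(x, z) \<in> (adj F K)\<^sup>*" using step.hyps by (rule rtrancl_into_rtrancl)
  then have "y \<in> component F K x" "z \<in> component F K x"
    using step.hyps(1) yz unfolding component_def by auto
  then show ?case using step.IH yz(1) by (meson adjI rtrancl_into_rtrancl)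
qed simp

lemma connected_in_component:
  assumes x: "x \<in> K" shows "connected_in F (component F K x)"
proof -
  have "(x, u) \<in> (adj F (component F K x))\<^sup>*" if "u \<in> component F K x" for u
    using component_adj_rtrancl[OF _ x] that unfolding component_def by blast
  then show ?thesis unfolding connected_in_adj using adj_rtrancl_sym rtrancl_trans by metis
qed

lemma component_eq:
  assumes "y \<in> component F K x" shows "component F K y = component F K x"
proof -
  have xy: "(x, y) \<in> (adj F K)\<^sup>*" using assms unfolding component_def by simp
  have yx: "(y, x) \<in> (adj F K)\<^sup>*" using adj_rtrancl_sym[OF xy] .
  have "(y, z) \<in> (adj F K)\<^sup>* \<longleftrightarrow> (x, z) \<in> (adj F K)\<^sup>*" for z
    using rtrancl_trans[OF xy, of z] rtrancl_trans[OF yx, of z] by blast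
  then show ?thesis unfolding component_def by blast
qed

lemma components_disjoint:
  assumes "component F K x \<noteq> component F K y"
  shows "component F K x \<inter> component F K y = {}"
proof (rule equals0I)
  fix z assume "z \<in> component F K x \<inter> component F K y"
  then show False using component_eq[of z F K x] component_eq[of z F K y] assms by simp
qed

lemma component_closed:
  assumes "{a, b} \<in> F" "a \<in> component F K x" "b \<in> K"
  shows "b \<in> component F K x"
proof -
  have xa: "(x, a) \<in> (adj F K)\<^sup>*" and "a \<in> K" using assms(2) unfolding component_def by auto
  then have "(x, b) \<in> (adj F K)\<^sup>*"
    using rtrancl_into_rtrancl[OF xa adjI[OF assms(1) _ assms(3)]] by simp
  then show ?thesis using assms(3) unfolding component_def by simp
qed

lemma component_attached:
  assumes A: "connected_in F A" and z: "z \<in> A \<inter> X" and d: "d \<in> A - X"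
  shows "\<exists>x y. {x, y} \<in> F \<and> x \<in> X \<and> x \<in> A \<and> y \<in> component F (A - X) d"
proof -
  let ?D = "component F (A - X) d"
  have dD: "d \<in> ?D" using component_self d .
  have "(d, z) \<in> (adj F A)\<^sup>*" using A z d unfolding connected_in_adj by blast
  from adj_rtrancl_exit[OF this dD]
  consider "(d, z) \<in> (adj F (A \<inter> ?D))\<^sup>*" | a b where "{a, b} \<in> F" "a \<in> A \<inter> ?D" "b \<in> A - ?D"
    by blast
  then show ?thesis
  proof cases
    case 1
    then have "z \<in> ?D" using adj_rtrancl_endpoints[OF 1] dD by blast
    then show ?thesis using z component_subset[of F "A - X" d] by blast
  next
    case 2
    then have "b \<in> X" using component_closed[OF 2(1), of "A - X" d] by blast
    moreover have "{b, a} \<in> F" using 2(1) by (simp add: insert_commute)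
    ultimately show ?thesis using 2 by blast
  qed
qed

section \<open>Trees\<close>

lemma adj_insert_rtrancl_cases:
  assumes "(x, y) \<in> (adj (insert {a, b} F) N)\<^sup>*"
  shows "(x, y) \<in> (adj F N)\<^sup>* \<or> ((x, a) \<in> (adj F N)\<^sup>* \<and> (b, y) \<in> (adj F N)\<^sup>*)
         \<or> ((x, b) \<in> (adj F N)\<^sup>* \<and> (a, y) \<in> (adj F N)\<^sup>*)"
  using assms
proof (induction rule: rtrancl_induct)
  case (step y z)
  from step.hyps(2) have yz: "{y, z} = {a, b} \<or> {y, z} \<in> F" "y \<in> N" "z \<in> N"
    by (auto simp: adj_def)
  show ?case
  proof (cases "{y, z} \<in> F")
    case True
    then have yz': "(y, z) \<in> (adj F N)\<^sup>*" using yz by (blast intro: adjI)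
    have "(u, z) \<in> (adj F N)\<^sup>*" if "(u, y) \<in> (adj F N)\<^sup>*" for u
      using rtrancl_trans[OF that yz'] .
    then show ?thesis using step.IH by blast
  next
    case False
    then have "(y = a \<and> z = b) \<or> (y = b \<and> z = a)" using yz by (metis doubleton_eq_iff)
    then show ?thesis using step.IH by auto
  qed
qed simp

lemma adj_insert_rtrancl_redundant:
  assumes "(x, y) \<in> (adj (insert {a, b} F) N)\<^sup>*" "(a, b) \<in> (adj F N)\<^sup>*"
  shows "(x, y) \<in> (adj F N)\<^sup>*"
proof -
  have "(x, a) \<in> (adj F N)\<^sup>* \<Longrightarrow> (b, y) \<in> (adj F N)\<^sup>* \<Longrightarrow> ?thesis"
    using rtrancl_trans[OF rtrancl_trans[OF _ assms(2)]] by blast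
  moreover have "(x, b) \<in> (adj F N)\<^sup>* \<Longrightarrow> (a, y) \<in> (adj F N)\<^sup>* \<Longrightarrow> ?thesis"
    using rtrancl_trans[OF rtrancl_trans[OF _ adj_rtrancl_sym[OF assms(2)]]] by blast
  ultimately show ?thesis using adj_insert_rtrancl_cases[OF assms(1)] by blast
qed

definition component_representatives :: "'b set set \<Rightarrow> 'b set \<Rightarrow> 'b set \<Rightarrow> bool" where
  "component_representatives F N R \<longleftrightarrow> R \<subseteq> N \<and>
     (\<forall>x\<in>N. \<exists>r\<in>R. (x, r) \<in> (adj F N)\<^sup>*) \<and>
     (\<forall>r\<in>R. \<forall>r'\<in>R. (r, r') \<in> (adj F N)\<^sup>* \<longrightarrow> r = r')"

lemma component_representatives_insert_redundant:
  assumes "component_representatives F N R" "(a, b) \<in> (adj F N)\<^sup>*"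
  shows "component_representatives (insert {a, b} F) N R"
  using assms adj_insert_rtrancl_redundant[OF _ assms(2)]
    adj_rtrancl_mono[of _ _ F N N "insert {a, b} F"]
  unfolding component_representatives_def by blast

lemma component_representatives_insert_bridge:
  assumes R: "component_representatives F N R" and ab: "a \<in> N" "b \<in> N" "(a, b) \<notin> (adj F N)\<^sup>*"
  shows "\<exists>rb\<in>R. component_representatives (insert {a, b} F) N (R - {rb})"
proof -
  let ?F' = "insert {a, b} F"
  have R_sub: "R \<subseteq> N" and cover: "\<forall>x\<in>N. \<exists>r\<in>R. (x, r) \<in> (adj F N)\<^sup>*"
    and uniq: "\<forall>r\<in>R. \<forall>r'\<in>R. (r, r') \<in> (adj F N)\<^sup>* \<longrightarrow> r = r'"
    using R unfolding component_representatives_def by blast+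
  have mono: "(x, y) \<in> (adj ?F' N)\<^sup>*" if "(x, y) \<in> (adj F N)\<^sup>*" for x y
    using adj_rtrancl_mono[OF that] by blast
  have ab': "(a, b) \<in> (adj ?F' N)\<^sup>*" using ab by (blast intro: adjI)
  obtain ra where ra: "ra \<in> R" "(a, ra) \<in> (adj F N)\<^sup>*" using cover ab(1) by blast
  obtain rb where rb: "rb \<in> R" "(b, rb) \<in> (adj F N)\<^sup>*" using cover ab(2) by blast
  have "ra \<noteq> rb"
  proof
    assume "ra = rb"
    then have "(ra, b) \<in> (adj F N)\<^sup>*" using adj_rtrancl_sym[OF rb(2)] by simp
    then have "(a, b) \<in> (adj F N)\<^sup>*" using rtrancl_trans[OF ra(2)] by blast
    then show False using ab(3) by simp
  qed
  have "\<exists>r\<in>R - {rb}. (x, r) \<in> (adj ?F' N)\<^sup>*" if "x \<in> N" for x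
  proof -
    obtain r where r: "r \<in> R" "(x, r) \<in> (adj F N)\<^sup>*" using cover \<open>x \<in> N\<close> by blast
    show ?thesis
    proof (cases "r = rb")
      case True
      then have "(x, b) \<in> (adj F N)\<^sup>*"
        using rtrancl_trans[OF r(2)] adj_rtrancl_sym[OF rb(2)] by simp
      then have "(x, b) \<in> (adj ?F' N)\<^sup>*" using mono by blast
      then have "(x, ra) \<in> (adj ?F' N)\<^sup>*"
        using rtrancl_trans[OF rtrancl_trans[OF _ adj_rtrancl_sym[OF ab']] mono[OF ra(2)]] by blast
      then show ?thesis using ra(1) \<open>ra \<noteq> rb\<close> by blast
    qed (use r mono in blast)
  qed
  moreover have "r = r'"
    if rr: "r \<in> R - {rb}" "r' \<in> R - {rb}" "(r, r') \<in> (adj ?F' N)\<^sup>*" for r r'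
  proof -
    from adj_insert_rtrancl_cases[OF rr(3)]
    consider "(r, r') \<in> (adj F N)\<^sup>*" | "(b, r') \<in> (adj F N)\<^sup>*" | "(r, b) \<in> (adj F N)\<^sup>*"
      by blast
    then show ?thesis
    proof cases
      case 2
      then have "rb = r'" using uniq rr rb(1) rtrancl_trans[OF adj_rtrancl_sym[OF rb(2)] 2] by blast
      then show ?thesis using rr by blast
    next
      case 3
      then have "r = rb" using uniq rr rb(1) rtrancl_trans[OF 3 rb(2)] by blast
      then show ?thesis using rr by blast
    qed (use uniq rr in blast)
  qed
  ultimately show ?thesis
    using rb(1) R_sub unfolding component_representatives_def by blast
qed

lemma component_representatives_exist:
  assumes "finite F" "finite N" "\<forall>e\<in>F. card e = 2 \<and> e \<subseteq> N"
  shows "\<exists>R. component_representatives F N R \<and> card N \<le> card R + card F"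
  using assms(1,3)
proof (induction F rule: finite_induct)
  case empty
  have "adj {} N = {}" by (simp add: adj_def)
  then show ?case unfolding component_representatives_def by (intro exI[of _ N]) auto
next
  case (insert e F)
  have "\<forall>e\<in>F. card e = 2 \<and> e \<subseteq> N" using insert.prems by simp
  then obtain R where R: "component_representatives F N R" "card N \<le> card R + card F"
    using insert.IH by blast
  from insert.prems obtain a b where e: "e = {a, b}" "a \<in> N" "b \<in> N"
    unfolding card_2_iff by auto
  have card_insert: "card (insert e F) = card F + 1" using insert by simp
  show ?case
  proof (cases "(a, b) \<in> (adj F N)\<^sup>*")
    case True
    then have "component_representatives (insert e F) N R"
      using component_representatives_insert_redundant[OF R(1)] e(1) by blast
    then show ?thesis using R(2) card_insert by (intro exI[of _ R]) auto
  next
    case False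
    then obtain rb where rb: "rb \<in> R" "component_representatives (insert e F) N (R - {rb})"
      using component_representatives_insert_bridge[OF R(1) e(2,3)] e(1) by blast
    have "R \<subseteq> N" using R(1) unfolding component_representatives_def by blast
    then have "finite R" using assms(2) by (rule finite_subset)
    then have "card R = card (R - {rb}) + 1"
      using rb(1) card_Diff_singleton[OF rb(1)] card_gt_0_iff[of R] by auto
    then show ?thesis using rb(2) R(2) card_insert by (intro exI[of _ "R - {rb}"]) auto
  qed
qed

lemma connected_card_le:
  assumes "finite F" "finite N" "\<forall>e\<in>F. card e = 2 \<and> e \<subseteq> N" "connected_in F N" "N \<noteq> {}"
  shows "card N \<le> card F + 1"
proof -
  obtain R where R: "component_representatives F N R" "card N \<le> card R + card F"
    using component_representatives_exist[OF assms(1-3)] by blast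
  have "R \<subseteq> N" "\<forall>r\<in>R. \<forall>r'\<in>R. r = r'"
    using R(1) assms(4) unfolding component_representatives_def connected_in_adj by blast+
  moreover have "finite R" using \<open>R \<subseteq> N\<close> assms(2) by (rule finite_subset)
  ultimately have "card R \<le> 1" by (simp add: card_le_Suc0_iff_eq)
  then show ?thesis using R(2) by linarith
qed

lemma tree_edge_bridge:
  assumes T: "tree N F" and e: "{a, b} \<in> F"
  shows "(a, b) \<notin> (adj (F - {{a, b}}) N)\<^sup>*"
proof
  assume ab: "(a, b) \<in> (adj (F - {{a, b}}) N)\<^sup>*"
  let ?F' = "F - {{a, b}}"
  from T have g: "graph N F" "N \<noteq> {}" "connected_in F N" "card F = card N - 1"
    unfolding tree_def by auto
  have finN: "finite N" using g(1) unfolding graph_def by auto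
  have "F \<subseteq> Pow N" using g(1) unfolding graph_def by auto
  then have finF: "finite F" using finN by (simp add: finite_subset)
  have "(u, v) \<in> (adj ?F' N)\<^sup>*" if "u \<in> N" "v \<in> N" for u v
  proof -
    have "insert {a, b} ?F' = F" using e by blast
    then have "(u, v) \<in> (adj (insert {a, b} ?F') N)\<^sup>*"
      using g(3) that unfolding connected_in_adj by simp
    then show ?thesis using adj_insert_rtrancl_redundant[OF _ ab] by blast
  qed
  then have "connected_in ?F' N" unfolding connected_in_adj by blast
  moreover have "\<forall>e\<in>?F'. card e = 2 \<and> e \<subseteq> N" using g(1) unfolding graph_def by auto
  ultimately have "card N \<le> card ?F' + 1"
    using connected_card_le[of ?F' N] finF finN g(2) by blast
  moreover have "card ?F' = card F - 1" using e finF by simp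
  moreover have "card N > 0" using finN g(2) by auto
  moreover have "card F > 0" using e finF card_gt_0_iff[of F] by blast
  ultimately show False using g(4) by linarith
qed

text \<open>Otherwise a walk from \<open>a\<close> through \<open>X\<close>, across \<open>{a', b'}\<close> and through \<open>Y\<close> to \<open>b\<close>
  would avoid the edge \<open>{a, b}\<close>.\<close>
lemma tree_unique_edge_between:
  assumes T: "tree N F"
    and XY: "X \<subseteq> N" "Y \<subseteq> N" "X \<inter> Y = {}" "connected_in F X" "connected_in F Y"
    and e: "{a, b} \<in> F" "a \<in> X" "b \<in> Y"
    and e': "{a', b'} \<in> F" "a' \<in> X" "b' \<in> Y"
  shows "a = a' \<and> b = b'"
proof (rule ccontr)
  assume "\<not> (a = a' \<and> b = b')"
  then have ne: "{a, b} \<noteq> {a', b'}" using e e' XY(3) by (auto simp: doubleton_eq_iff)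
  let ?F' = "F - {{a, b}}"
  have avoid: "(x, y) \<in> (adj ?F' N)\<^sup>*"
    if "(x, y) \<in> (adj F Z)\<^sup>*" "Z \<subseteq> N" "b \<notin> Z \<or> a \<notin> Z" for x y Z
  proof -
    have "adj F Z \<subseteq> adj ?F' N" using that(2,3) unfolding adj_def by (auto simp: doubleton_eq_iff)
    then show ?thesis using rtrancl_mono that(1) by blast
  qed
  have "(a, a') \<in> (adj F X)\<^sup>*" "(b', b) \<in> (adj F Y)\<^sup>*"
    using XY(4,5) e e' unfolding connected_in_adj by blast+
  moreover have "b \<notin> X" "a \<notin> Y" using e(2,3) XY(3) by blast+
  ultimately have aa': "(a, a') \<in> (adj ?F' N)\<^sup>*" and b'b: "(b', b) \<in> (adj ?F' N)\<^sup>*"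
    using avoid XY(1,2) by blast+
  have "(a', b') \<in> adj ?F' N" using e' ne XY(1,2) by (auto simp: adj_def)
  then have "(a, b) \<in> (adj ?F' N)\<^sup>*"
    using rtrancl_trans[OF rtrancl_into_rtrancl[OF aa'] b'b] by blast
  then show False using tree_edge_bridge[OF T e(1)] by contradiction
qed

section \<open>Path decompositions of induced subforests\<close>

definition contiguous :: "'b \<Rightarrow> 'b set list \<Rightarrow> bool" where
  "contiguous x L \<longleftrightarrow>
     (\<forall>i j k. i \<le> j \<and> j \<le> k \<and> k < length L \<and> x \<in> L ! i \<and> x \<in> L ! k \<longrightarrow> x \<in> L ! j)"

definition induced_pd :: "'b set set \<Rightarrow> 'b set \<Rightarrow> 'b set list \<Rightarrow> bool" where
  "induced_pd F Y L \<longleftrightarrow> L \<noteq> [] \<and> (\<forall>X\<in>set L. X \<subseteq> Y) \<and> (\<forall>x\<in>Y. \<exists>X\<in>set L. x \<in> X) \<and>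
     (\<forall>x y. {x, y} \<in> F \<longrightarrow> x \<in> Y \<longrightarrow> y \<in> Y \<longrightarrow> (\<exists>X\<in>set L. x \<in> X \<and> y \<in> X)) \<and>
     (\<forall>x. contiguous x L)"

lemma induced_pdD:
  assumes "induced_pd F Y L"
  shows "L \<noteq> []" "\<And>X. X \<in> set L \<Longrightarrow> X \<subseteq> Y" "\<And>x. x \<in> Y \<Longrightarrow> \<exists>X\<in>set L. x \<in> X"
    "\<And>x y. {x, y} \<in> F \<Longrightarrow> x \<in> Y \<Longrightarrow> y \<in> Y \<Longrightarrow> \<exists>X\<in>set L. x \<in> X \<and> y \<in> X"
    "\<And>x. contiguous x L"
  using assms unfolding induced_pd_def by auto

lemma induced_pdI:
  assumes "L \<noteq> []" "\<And>X. X \<in> set L \<Longrightarrow> X \<subseteq> Y" "\<And>x. x \<in> Y \<Longrightarrow> \<exists>X\<in>set L. x \<in> X"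
    "\<And>x y. {x, y} \<in> F \<Longrightarrow> x \<in> Y \<Longrightarrow> y \<in> Y \<Longrightarrow> \<exists>X\<in>set L. x \<in> X \<and> y \<in> X"
    "\<And>x. contiguous x L"
  shows "induced_pd F Y L"
  using assms unfolding induced_pd_def by auto

lemma path_decompositionD:
  assumes "path_decomposition V E Ps"
  shows "Ps \<noteq> []" "\<And>X. X \<in> set Ps \<Longrightarrow> X \<subseteq> V" "\<And>e. e \<in> E \<Longrightarrow> \<exists>X\<in>set Ps. e \<subseteq> X"
    "\<And>v. v \<in> V \<Longrightarrow> \<exists>X\<in>set Ps. v \<in> X"
    "\<And>v i j k. v \<in> V \<Longrightarrow> i \<le> j \<Longrightarrow> j \<le> k \<Longrightarrow> k < length Ps \<Longrightarrow> v \<in> Ps ! i \<Longrightarrow>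
       v \<in> Ps ! k \<Longrightarrow> v \<in> Ps ! j"
  using assms unfolding path_decomposition_def by blast+

lemma induced_pd_if_path_decomposition:
  assumes pd: "path_decomposition Y {e \<in> F. e \<subseteq> Y} L"
  shows "induced_pd F Y L"
proof (rule induced_pdI)
  show "L \<noteq> []" using path_decompositionD(1)[OF pd] .
  show "X \<subseteq> Y" if "X \<in> set L" for X using path_decompositionD(2)[OF pd that] .
  show "\<exists>X\<in>set L. x \<in> X" if "x \<in> Y" for x using path_decompositionD(4)[OF pd that] .
  show "\<exists>X\<in>set L. x \<in> X \<and> y \<in> X" if "{x, y} \<in> F" "x \<in> Y" "y \<in> Y" for x y
    using path_decompositionD(3)[OF pd, of "{x, y}"] that by simp
  show "contiguous x L" for x
  proof (cases "x \<in> Y")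
    case True
    then show ?thesis unfolding contiguous_def using path_decompositionD(5)[OF pd True] by blast
  next
    case False
    then have "x \<notin> L ! i" if "i < length L" for i
      using path_decompositionD(2)[OF pd] that nth_mem by blast
    then show ?thesis unfolding contiguous_def by auto
  qed
qed

lemma contiguous_reindex:
  assumes "contiguous x L" "\<And>j. j < length L' \<Longrightarrow> x \<in> L' ! j \<longleftrightarrow> x \<in> L ! (g j)"
    "mono g" "\<And>j. j < length L' \<Longrightarrow> g j < length L"
  shows "contiguous x L'"
  unfolding contiguous_def
proof (intro allI impI)
  fix i j k assume h: "i \<le> j \<and> j \<le> k \<and> k < length L' \<and> x \<in> L' ! i \<and> x \<in> L' ! k"
  then have "g i \<le> g j" "g j \<le> g k" "g k < length L" "x \<in> L ! g i" "x \<in> L ! g k"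
    using assms(2-4) monoD[OF assms(3)] by auto
  then have "x \<in> L ! g j" using assms(1) unfolding contiguous_def by blast
  then show "x \<in> L' ! j" using assms(2) h by auto
qed

lemma nth_append_Cons_append:
  "(L1 @ H # Q @ L2) ! j = (if j < length L1 then L1 ! j else if j = length L1 then H
     else if j \<le> length L1 + length Q then Q ! (j - length L1 - 1)
     else L2 ! (j - length L1 - length Q - 1))"
  by (auto simp: nth_append nth_Cons' not_less)

lemma nth_append_Cons:
  "(L1 @ H # L2) ! j = (if j < length L1 then L1 ! j else if j = length L1 then H
     else L2 ! (j - length L1 - 1))"
  by (auto simp: nth_append nth_Cons' not_less)

lemma contiguous_insert_outside:
  assumes "contiguous x (L1 @ H # L2)" "x \<notin> \<Union>(set P)"
  shows "contiguous x (L1 @ H # map ((\<union>) H) P @ L2)"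
proof -
  let ?L = "L1 @ H # L2" and ?L' = "L1 @ H # map ((\<union>) H) P @ L2"
  let ?n = "length L1" and ?m = "length P"
  define g where "g j = (if j \<le> ?n then j else if j \<le> ?n + ?m then ?n else j - ?m)" for j
  show ?thesis
  proof (rule contiguous_reindex[OF assms(1), of _ g])
    fix j assume j: "j < length ?L'"
    have "x \<notin> P ! (j - ?n - 1)" if "j > ?n" "j \<le> ?n + ?m"
      using assms(2) that nth_mem[of "j - ?n - 1" P] by auto
    moreover have "j - ?m - ?n - 1 = j - ?n - ?m - 1" by simp
    ultimately show "x \<in> ?L' ! j \<longleftrightarrow> x \<in> ?L ! g j"
      using j unfolding nth_append_Cons_append[of L1 H "map ((\<union>) H) P" L2] nth_append_Cons g_def
      by (auto simp: nth_append)
  next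
    show "mono g" unfolding mono_def g_def by auto
  next
    fix j assume "j < length ?L'" then show "g j < length ?L" unfolding g_def by auto
  qed
qed

lemma contiguous_insert_inside:
  assumes "contiguous x P" "x \<notin> \<Union>(set (L1 @ H # L2))"
  shows "contiguous x (L1 @ H # map ((\<union>) H) P @ L2)"
proof -
  let ?L' = "L1 @ H # map ((\<union>) H) P @ L2"
  let ?n = "length L1" and ?m = "length P"
  have mem: "x \<in> ?L' ! j \<longleftrightarrow> ?n < j \<and> j \<le> ?n + ?m \<and> x \<in> P ! (j - ?n - 1)"
    if "j < length ?L'" for j
  proof -
    have "L1 ! j \<in> set (L1 @ H # L2)" if "j < ?n" using that by auto
    moreover have "L2 ! (j - ?n - ?m - 1) \<in> set (L1 @ H # L2)" if "\<not> j \<le> ?n + ?m"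
      using that \<open>j < length ?L'\<close> by auto
    ultimately show ?thesis
      using assms(2) \<open>j < length ?L'\<close>
      unfolding nth_append_Cons_append[of L1 H "map ((\<union>) H) P" L2]
      by (auto simp: nth_append)
  qed
  show ?thesis unfolding contiguous_def
  proof (intro allI impI)
    fix i j k assume h: "i \<le> j \<and> j \<le> k \<and> k < length ?L' \<and> x \<in> ?L' ! i \<and> x \<in> ?L' ! k"
    then have a: "?n < i" "i \<le> ?n + ?m" "x \<in> P ! (i - ?n - 1)"
      "?n < k" "k \<le> ?n + ?m" "x \<in> P ! (k - ?n - 1)"
      using mem[of i] mem[of k] by auto
    moreover have "i - ?n - 1 \<le> j - ?n - 1" "j - ?n - 1 \<le> k - ?n - 1" "k - ?n - 1 < length P"
      using a h by auto
    ultimately have "x \<in> P ! (j - ?n - 1)"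
      using assms(1)[unfolded contiguous_def, rule_format, of "i - ?n - 1" "j - ?n - 1" "k - ?n - 1"]
      by blast
    then show "x \<in> ?L' ! j" using mem[of j] a h by auto
  qed
qed

definition attached_at :: "'b set set \<Rightarrow> 'b set \<Rightarrow> 'b set \<Rightarrow> 'b \<Rightarrow> bool" where
  "attached_at F X D a \<longleftrightarrow> (\<forall>x y. {x, y} \<in> F \<longrightarrow> x \<in> X \<longrightarrow> y \<in> D \<longrightarrow> x = a)"

text \<open>Adding \<open>H \<ni> a\<close> to the bags of \<open>P\<close> covers the edges between \<open>Y\<close> and \<open>D\<close>,
  which all leave \<open>Y\<close> at \<open>a\<close>.\<close>
lemma induced_pd_insert:
  assumes L: "induced_pd F Y (L1 @ H # L2)" and P: "induced_pd F D P" and disj: "Y \<inter> D = {}"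
    and a: "a \<in> H" and att: "attached_at F Y D a"
  shows "induced_pd F (Y \<union> D) (L1 @ H # map ((\<union>) H) P @ L2)"
proof -
  let ?L = "L1 @ H # L2" and ?L' = "L1 @ H # map ((\<union>) H) P @ L2"
  have set_L': "set ?L' = set ?L \<union> (\<union>) H ` set P" by auto
  have LY: "\<And>X. X \<in> set ?L \<Longrightarrow> X \<subseteq> Y" by (rule induced_pdD(2)[OF L])
  have PD: "\<And>X. X \<in> set P \<Longrightarrow> X \<subseteq> D" by (rule induced_pdD(2)[OF P])
  have HY: "H \<subseteq> Y" using LY by simp
  have mixed: "\<exists>X\<in>set ?L'. x \<in> X \<and> y \<in> X" if "{x, y} \<in> F" "x \<in> Y" "y \<in> D" for x y
  proof -
    have "x = a" using att that unfolding attached_at_def by blast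
    obtain X where "X \<in> set P" "y \<in> X" using induced_pdD(3)[OF P \<open>y \<in> D\<close>] by blast
    then show ?thesis using \<open>x = a\<close> a unfolding set_L' by blast
  qed
  show ?thesis
  proof (rule induced_pdI)
    show "?L' \<noteq> []" by simp
    show "X \<subseteq> Y \<union> D" if "X \<in> set ?L'" for X using that LY PD HY unfolding set_L' by blast
    show "\<exists>X\<in>set ?L'. x \<in> X" if "x \<in> Y \<union> D" for x
    proof (cases "x \<in> Y")
      case True
      then show ?thesis using induced_pdD(3)[OF L True] unfolding set_L' by blast
    next
      case False
      then show ?thesis using induced_pdD(3)[OF P, of x] that unfolding set_L' by blast
    qed
    show "\<exists>X\<in>set ?L'. x \<in> X \<and> y \<in> X" if e: "{x, y} \<in> F" "x \<in> Y \<union> D" "y \<in> Y \<union> D" for x y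
    proof -
      have e': "{y, x} \<in> F" using e(1) by (simp add: insert_commute)
      consider "x \<in> Y" "y \<in> Y" | "x \<in> D" "y \<in> D" | "x \<in> Y" "y \<in> D" | "x \<in> D" "y \<in> Y"
        using e by blast
      then show ?thesis
      proof cases
        case 1 then show ?thesis using induced_pdD(4)[OF L e(1)] unfolding set_L' by blast
      next
        case 2 then show ?thesis using induced_pdD(4)[OF P e(1)] unfolding set_L' by blast
      next
        case 3 then show ?thesis using mixed e(1) by blast
      next
        case 4 then show ?thesis using mixed[OF e'] by blast
      qed
    qed
    show "contiguous x ?L'" for x
    proof (cases "x \<in> \<Union>(set P)")
      case True
      then have "x \<notin> \<Union>(set ?L)" using LY PD disj by blast
      then show ?thesis using contiguous_insert_inside[OF induced_pdD(5)[OF P]] by blast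
    next
      case False
      then show ?thesis using contiguous_insert_outside[OF induced_pdD(5)[OF L]] by blast
    qed
  qed
qed

lemma induced_pd_splice:
  assumes L: "induced_pd F Y L" and H: "H \<in> set L" "a \<in> H" and P: "induced_pd F D P"
    and "Y \<inter> D = {}" "attached_at F Y D a"
  shows "\<exists>L'. induced_pd F (Y \<union> D) L' \<and> set L' = set L \<union> (\<union>) H ` set P"
proof -
  obtain L1 L2 where L12: "L = L1 @ H # L2" using split_list[OF H(1)] by blast
  have "induced_pd F (Y \<union> D) (L1 @ H # map ((\<union>) H) P @ L2)"
    using induced_pd_insert[OF L[unfolded L12] P assms(5) H(2) assms(6)] .
  moreover have "set (L1 @ H # map ((\<union>) H) P @ L2) = set L \<union> (\<union>) H ` set P" using L12 by auto
  ultimately show ?thesis by blast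
qed

lemma induced_pd_splice_all:
  fixes PP :: "'b set \<Rightarrow> 'b set list" and att :: "'b set \<Rightarrow> 'b"
  assumes Z: "induced_pd F X Z" and fin: "finite \<D>"
    and parts: "\<And>D. D \<in> \<D> \<Longrightarrow>
      induced_pd F D (PP D) \<and> D \<inter> X = {} \<and> att D \<in> X \<and> attached_at F X D (att D)"
    and apart: "\<And>D D'. D \<in> \<D> \<Longrightarrow> D' \<in> \<D> \<Longrightarrow> D \<noteq> D' \<Longrightarrow>
      D \<inter> D' = {} \<and> (\<forall>x\<in>D'. \<forall>y\<in>D. {x, y} \<notin> F)"
  shows "\<exists>L. induced_pd F (X \<union> \<Union>\<D>) L \<and> set Z \<subseteq> set L \<and>
     set L \<subseteq> set Z \<union> {H \<union> Q | D H Q. D \<in> \<D> \<and> H \<in> set Z \<and> Q \<in> set (PP D) \<and> att D \<in> H}"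
  using fin parts apart
proof (induction \<D> rule: finite_induct)
  case empty
  then show ?case using Z by (intro exI[of _ Z]) auto
next
  case (insert D \<D>)
  have parts': "induced_pd F D' (PP D') \<and> D' \<inter> X = {} \<and> att D' \<in> X \<and> attached_at F X D' (att D')"
    if "D' \<in> \<D>" for D'
    using insert.prems(1)[OF insertI2[OF that]] .
  have apart': "D1 \<inter> D2 = {} \<and> (\<forall>x\<in>D2. \<forall>y\<in>D1. {x, y} \<notin> F)"
    if "D1 \<in> \<D>" "D2 \<in> \<D>" "D1 \<noteq> D2" for D1 D2
    using insert.prems(2)[OF insertI2[OF that(1)] insertI2[OF that(2)] that(3)] .
  obtain L where L: "induced_pd F (X \<union> \<Union>\<D>) L" "set Z \<subseteq> set L"
    "set L \<subseteq> set Z \<union> {H \<union> Q | D H Q. D \<in> \<D> \<and> H \<in> set Z \<and> Q \<in> set (PP D) \<and> att D \<in> H}"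
    using insert.IH[OF parts' apart'] by blast
  have D: "induced_pd F D (PP D)" "D \<inter> X = {}" "att D \<in> X" "attached_at F X D (att D)"
    using insert.prems(1)[OF insertI1] by auto
  have apart_D: "D' \<inter> D = {}" "\<forall>x\<in>D'. \<forall>y\<in>D. {x, y} \<notin> F" if "D' \<in> \<D>" for D'
    using insert.prems(2)[OF insertI1 insertI2[OF that]] insert.hyps(2) that by blast+
  obtain H where H: "H \<in> set Z" "att D \<in> H" using induced_pdD(3)[OF Z D(3)] by blast
  have "(X \<union> \<Union>\<D>) \<inter> D = {}" using D(2) apart_D(1) by blast
  moreover have "attached_at F (X \<union> \<Union>\<D>) D (att D)"
    using D(4) apart_D(2) unfolding attached_at_def by blast
  ultimately obtain L' where L': "induced_pd F ((X \<union> \<Union>\<D>) \<union> D) L'"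
    "set L' = set L \<union> (\<union>) H ` set (PP D)"
    using induced_pd_splice[OF L(1) _ H(2) D(1)] H(1) L(2) by blast
  have "(X \<union> \<Union>\<D>) \<union> D = X \<union> \<Union>(insert D \<D>)" by blast
  then have "induced_pd F (X \<union> \<Union>(insert D \<D>)) L'" using L'(1) by simp
  moreover have "set Z \<subseteq> set L'" using L(2) L'(2) by blast
  moreover have "set L' \<subseteq> set Z \<union>
      {H \<union> Q | D' H Q. D' \<in> insert D \<D> \<and> H \<in> set Z \<and> Q \<in> set (PP D') \<and> att D' \<in> H}"
    (is "_ \<subseteq> ?new")
  proof
    fix Y assume "Y \<in> set L'"
    then consider "Y \<in> set L" | Q where "Q \<in> set (PP D)" "Y = H \<union> Q" using L'(2) by blast
    then show "Y \<in> ?new"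
    proof cases
      case 1
      then have "Y \<in> set Z \<or> (\<exists>D' H Q. Y = H \<union> Q \<and> D' \<in> \<D> \<and> H \<in> set Z \<and> Q \<in> set (PP D') \<and> att D' \<in> H)"
        using L(3) by blast
      then show ?thesis by blast
    qed (use H in blast)
  qed
  ultimately show ?case by blast
qed

lemma induced_pd_restrict:
  assumes P: "induced_pd F A P" and "D \<subseteq> A"
  shows "induced_pd F D (map (\<lambda>X. X \<inter> D) P)"
proof (rule induced_pdI)
  show "map (\<lambda>X. X \<inter> D) P \<noteq> []" using induced_pdD(1)[OF P] by simp
  show "X \<subseteq> D" if "X \<in> set (map (\<lambda>X. X \<inter> D) P)" for X using that by auto
  show "\<exists>X\<in>set (map (\<lambda>X. X \<inter> D) P). x \<in> X" if "x \<in> D" for x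
    using induced_pdD(3)[OF P, of x] that \<open>D \<subseteq> A\<close> by auto
  show "\<exists>X\<in>set (map (\<lambda>X. X \<inter> D) P). x \<in> X \<and> y \<in> X" if "{x, y} \<in> F" "x \<in> D" "y \<in> D" for x y
    using induced_pdD(4)[OF P, of x y] that \<open>D \<subseteq> A\<close> by auto
  show "contiguous x (map (\<lambda>X. X \<inter> D) P)" for x
  proof (cases "x \<in> D")
    case True
    show ?thesis
      by (rule contiguous_reindex[OF induced_pdD(5)[OF P], of _ _ id]) (use True in \<open>auto simp: mono_def\<close>)
  qed (simp add: contiguous_def)
qed

lemma components_apart:
  assumes "D \<in> component F K ` K" "D' \<in> component F K ` K" "D \<noteq> D'"
  shows "D \<inter> D' = {} \<and> (\<forall>x\<in>D'. \<forall>y\<in>D. {x, y} \<notin> F)"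
proof -
  obtain d d' where d: "d \<in> K" "D = component F K d" and d': "D' = component F K d'"
    using assms(1,2) by blast
  have disj: "D \<inter> D' = {}" using components_disjoint[of F K d d'] assms(3) d d' by blast
  have "{x, y} \<notin> F" if "x \<in> D'" "y \<in> D" for x y
  proof
    assume "{x, y} \<in> F"
    moreover have "y \<in> K" using that(2) d component_subset[of F K d] by blast
    ultimately have "y \<in> D'" using component_closed[of x y F K d'] that(1) d' by blast
    then show False using disj that(2) by blast
  qed
  then show ?thesis using disj by blast
qed

lemma tree_component_attached_once:
  assumes T: "tree N F" and A: "A \<subseteq> N" "connected_in F A" and X: "X \<subseteq> N" "connected_in F X"
    and z: "z \<in> A \<inter> X" and d: "d \<in> A - X"
  obtains a b where "a \<in> X" "a \<in> A" "b \<in> component F (A - X) d" "{a, b} \<in> F"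
    "\<And>x y. {x, y} \<in> F \<Longrightarrow> x \<in> X \<Longrightarrow> y \<in> component F (A - X) d \<Longrightarrow> x = a \<and> y = b"
proof -
  let ?D = "component F (A - X) d"
  obtain a b where ab: "{a, b} \<in> F" "a \<in> X" "a \<in> A" "b \<in> ?D"
    using component_attached[OF A(2) z d] by blast
  have "?D \<subseteq> N" "X \<inter> ?D = {}" using component_subset[of F "A - X" d] A(1) by blast+
  moreover have "connected_in F ?D" using connected_in_component[OF d] .
  ultimately have "x = a \<and> y = b" if "{x, y} \<in> F" "x \<in> X" "y \<in> ?D" for x y
    using tree_unique_edge_between[OF T X(1) _ _ X(2) _ that ab(1,2,4)] by blast
  with ab show ?thesis using that by blast
qed

lemma tree_components_attached:
  assumes T: "tree N F" and A: "A \<subseteq> N" "connected_in F A" and X: "X \<subseteq> N" "connected_in F X"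
    and meet: "X \<inter> A \<noteq> {}"
  shows "\<exists>att. \<forall>D\<in>component F (A - X) ` (A - X). att D \<in> X \<and> attached_at F X D (att D)"
proof -
  obtain z where z: "z \<in> A \<inter> X" using meet by blast
  have "\<exists>a. a \<in> X \<and> attached_at F X D a" if D: "D \<in> component F (A - X) ` (A - X)" for D
  proof -
    obtain d where d: "d \<in> A - X" "D = component F (A - X) d" using D by blast
    show ?thesis
    proof (rule tree_component_attached_once[OF T A X z d(1)])
      fix a b assume "a \<in> X"
        "\<And>x y. {x, y} \<in> F \<Longrightarrow> x \<in> X \<Longrightarrow> y \<in> component F (A - X) d \<Longrightarrow> x = a \<and> y = b"
      then show ?thesis unfolding attached_at_def d(2) by blast
    qed
  qed
  then have "\<forall>D\<in>component F (A - X) ` (A - X). \<exists>a. a \<in> X \<and> attached_at F X D a" by blast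
  then show ?thesis by (rule bchoice)
qed

text \<open>Each component of \<open>A - X\<close> is spliced into the decomposition of \<open>X\<close>, using the
  restriction of the decomposition of \<open>A\<close>.\<close>
lemma induced_pd_Un:
  assumes T: "tree N F" and sub: "X \<subseteq> N" "A \<subseteq> N" and con: "connected_in F X" "connected_in F A"
    and meet: "X \<inter> A \<noteq> {}"
    and Z: "induced_pd F X Z" "\<forall>Y\<in>set Z. card Y \<le> k"
    and P: "induced_pd F A P" "\<forall>Y\<in>set P. card Y \<le> q"
  shows "\<exists>L. induced_pd F (X \<union> A) L \<and> (\<forall>Y\<in>set L. card Y \<le> k + q)"
proof -
  let ?K = "A - X"
  let ?\<D> = "component F ?K ` ?K"
  have "finite N" using T unfolding tree_def graph_def by auto
  then have finA: "finite A" using sub(2) by (rule finite_subset[rotated])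
  obtain att where att: "\<forall>D\<in>?\<D>. att D \<in> X \<and> attached_at F X D (att D)"
    using tree_components_attached[OF T sub(2) con(2) sub(1) con(1) meet] by blast
  have parts: "induced_pd F D (map (\<lambda>Y. Y \<inter> D) P) \<and> D \<inter> X = {} \<and> att D \<in> X \<and>
      attached_at F X D (att D)" if "D \<in> ?\<D>" for D
  proof -
    have "D \<subseteq> A - X" using that component_subset[of F ?K] by blast
    then show ?thesis using induced_pd_restrict[OF P(1)] att[rule_format, OF that] by blast
  qed
  have "finite ?\<D>" using finA by simp
  from induced_pd_splice_all[OF Z(1) this parts components_apart[of _ F ?K]]
  obtain L where L: "induced_pd F (X \<union> \<Union>?\<D>) L" "set L \<subseteq> set Z \<union>
      {H \<union> Q | D H Q. D \<in> ?\<D> \<and> H \<in> set Z \<and> Q \<in> set (map (\<lambda>Y. Y \<inter> D) P) \<and> att D \<in> H}"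
    by blast
  have "X \<union> \<Union>?\<D> = X \<union> A" using Union_components[of F ?K] by blast
  moreover have "card Y \<le> k + q" if "Y \<in> set L" for Y
  proof -
    from L(2) that consider "Y \<in> set Z" | D H Q0 where "H \<in> set Z" "Q0 \<in> set P" "Y = H \<union> (Q0 \<inter> D)"
      by auto
    then show ?thesis
    proof cases
      case 1 then show ?thesis using Z(2) by fastforce
    next
      case 2
      have "finite Q0" using induced_pdD(2)[OF P(1) 2(2)] finA by (rule finite_subset)
      then have "card (Q0 \<inter> D) \<le> q" using P(2) 2(2) card_mono[of Q0 "Q0 \<inter> D"] by fastforce
      moreover have "card H \<le> k" using Z(2) 2(1) by blast
      ultimately show ?thesis using 2(3) card_Un_le[of H "Q0 \<inter> D"] by simp
    qed
  qed
  ultimately show ?thesis using L(1) by (intro exI[of _ L]) simp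
qed

lemma induced_pd_connected_contiguous:
  assumes Z: "induced_pd F Y Z" and K: "K \<subseteq> Y" "connected_in F K"
    and ijk: "i \<le> j" "j \<le> k" "k < length Z" and ne: "Z ! i \<inter> K \<noteq> {}" "Z ! k \<inter> K \<noteq> {}"
  shows "Z ! j \<inter> K \<noteq> {}"
proof
  assume J: "Z ! j \<inter> K = {}"
  obtain x0 where x0: "x0 \<in> Z ! i" "x0 \<in> K" using ne(1) by blast
  obtain y0 where y0: "y0 \<in> Z ! k" "y0 \<in> K" using ne(2) by blast
  have ij: "i < j" using ijk(1) J x0 by (cases "i = j") auto
  have jk: "j < k" using ijk(2) J y0 by (cases "k = j") auto
  have contig: "x \<in> Z ! j" if "t < j" "j < t'" "t' < length Z" "x \<in> Z ! t" "x \<in> Z ! t'" for x t t'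
    using induced_pdD(5)[OF Z, of x] that unfolding contiguous_def by (meson less_imp_le_nat)
  text \<open>As \<open>K\<close> avoids bag \<open>j\<close>, a walk in \<open>K\<close> from \<open>x0\<close> never gets past bag \<open>j\<close>.\<close>
  have left: "\<exists>i'<j. y \<in> Z ! i'" if "(x0, y) \<in> (adj F K)\<^sup>*" for y
    using that
  proof (induction rule: rtrancl_induct)
    case base then show ?case using ij x0 by blast
  next
    case (step y z)
    have e: "{y, z} \<in> F" "y \<in> K" "z \<in> K" using step.hyps(2) by (auto simp: adj_def)
    obtain i' where i': "i' < j" "y \<in> Z ! i'" using step.IH by blast
    obtain t where t: "t < length Z" "y \<in> Z ! t" "z \<in> Z ! t"
      using induced_pdD(4)[OF Z e(1)] e(2,3) K(1) by (metis in_set_conv_nth subsetD)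
    have "t \<noteq> j" using J t(3) e(3) by blast
    moreover have "\<not> j < t" using contig[OF i'(1) _ t(1) i'(2) t(2)] J e(2) by blast
    ultimately show ?case using t(3) by (metis linorder_neqE_nat)
  qed
  have "(x0, y0) \<in> (adj F K)\<^sup>*" using K(2) x0(2) y0(2) unfolding connected_in_adj by blast
  then obtain i'' where "i'' < j" "y0 \<in> Z ! i''" using left by blast
  then show False using contig[OF _ jk ijk(3) _ y0(1)] J y0(2) by blast
qed

section \<open>Layouts along a good tree decomposition\<close>

locale good_td =
  fixes V :: "'a set" and E :: "'a set set" and N :: "'b set" and F :: "'b set set"
    and B :: "'b \<Rightarrow> 'a set" and w p :: nat
  assumes graph: "graph V E" and w_pos: "w \<ge> 1" and good: "good_tree_decomposition w p V E N F B"
begin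

abbreviation T :: "'a \<Rightarrow> 'b set" where "T v \<equiv> {x \<in> N. v \<in> B x}"

lemma tree_decomposition: "tree_decomposition V E N F B"
  using good unfolding good_tree_decomposition_def by blast

lemma tree_NF: "tree N F"
  using tree_decomposition unfolding tree_decomposition_def by blast

lemma finite_N: "finite N"
  using tree_NF unfolding tree_def graph_def by blast

lemma finite_V: "finite V"
  using graph unfolding graph_def by blast

lemma bag_subset: "x \<in> N \<Longrightarrow> B x \<subseteq> V"
  using tree_decomposition unfolding tree_decomposition_def by blast

lemma card_bag: "x \<in> N \<Longrightarrow> card (B x) \<le> w + 1"
  using good unfolding good_tree_decomposition_def by blast

lemma finite_bag: "x \<in> N \<Longrightarrow> finite (B x)"
  using finite_subset[OF bag_subset finite_V] .

lemma edge_nodes: "{x, y} \<in> F \<Longrightarrow> x \<in> N \<and> y \<in> N"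
  using tree_NF unfolding tree_def graph_def by blast

lemma edge_in_bag: "e \<in> E \<Longrightarrow> \<exists>x\<in>N. e \<subseteq> B x"
  using tree_decomposition unfolding tree_decomposition_def by blast

lemma connected_T: "v \<in> V \<Longrightarrow> connected_in F (T v)"
  using tree_decomposition unfolding tree_decomposition_def by blast

lemma T_nonempty: "v \<in> V \<Longrightarrow> T v \<noteq> {}"
  using tree_decomposition unfolding tree_decomposition_def by blast

lemma pd_T: "v \<in> V \<Longrightarrow> \<exists>P. induced_pd F (T v) P \<and> (\<forall>Y\<in>set P. card Y \<le> p + 1)"
proof -
  assume "v \<in> V"
  then have "pathwidth_le (fst (subtree_of N F B v)) (snd (subtree_of N F B v)) p"
    using good unfolding good_tree_decomposition_def by blast
  then obtain Ps where "path_decomposition (T v) {e \<in> F. e \<subseteq> T v} Ps"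
    "\<forall>X\<in>set Ps. card X \<le> p + 1"
    unfolding pathwidth_le_def subtree_of_def by auto
  then show ?thesis using induced_pd_if_path_decomposition by blast
qed

lemma connected_T_Int:
  assumes v: "v \<in> V" "c \<in> T v" and C: "c \<in> C" "attached_at F C (- C) c"
  shows "connected_in F (T v \<inter> C)"
proof -
  have to_c: "(x, c) \<in> (adj F (T v \<inter> C))\<^sup>*" if x: "x \<in> T v \<inter> C" for x
  proof -
    have "(x, c) \<in> (adj F (T v))\<^sup>*" using connected_T[OF v(1)] x v(2) unfolding connected_in_adj by blast
    from adj_rtrancl_exit[OF this, of C] x
    consider "(x, c) \<in> (adj F (T v \<inter> C))\<^sup>*"
      | a b where "{a, b} \<in> F" "a \<in> T v \<inter> C" "b \<in> T v - C" "(x, a) \<in> (adj F (T v \<inter> C))\<^sup>*"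
      by blast
    then show ?thesis
    proof cases
      case 2
      then have "a = c" using C(2) unfolding attached_at_def by blast
      then show ?thesis using 2(4) by simp
    qed
  qed
  show ?thesis unfolding connected_in_adj
  proof (intro ballI)
    fix x y assume "x \<in> T v \<inter> C" "y \<in> T v \<inter> C"
    from to_c[OF this(1)] adj_rtrancl_sym[OF to_c[OF this(2)]]
    show "(x, y) \<in> (adj F (T v \<inter> C))\<^sup>*" by (rule rtrancl_trans)
  qed
qed

lemma pd_T_Int:
  assumes "v \<in> V"
  shows "\<exists>P. induced_pd F (T v \<inter> C) P \<and> (\<forall>Y\<in>set P. card Y \<le> p + 1)"
proof -
  obtain P where P: "induced_pd F (T v) P" "\<forall>Y\<in>set P. card Y \<le> p + 1" using pd_T[OF assms] by blast
  have "card Y \<le> p + 1" if Y: "Y \<in> set (map (\<lambda>X. X \<inter> (T v \<inter> C)) P)" for Y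
  proof -
    obtain X where X: "X \<in> set P" "Y = X \<inter> (T v \<inter> C)" using Y by auto
    have "X \<subseteq> N" using induced_pdD(2)[OF P(1) X(1)] by blast
    then have "finite X" using finite_N by (rule finite_subset)
    then have "card Y \<le> card X" using X(2) by (simp add: card_mono)
    then show ?thesis using P(2) X(1) by (meson le_trans)
  qed
  then show ?thesis using induced_pd_restrict[OF P(1) Int_lower1] by blast
qed

text \<open>The subtrees \<open>T u\<close>, cut down to \<open>C\<close>, share the node \<open>c\<close>, so their
  decompositions can be merged one at a time.\<close>
lemma pd_UN_T_Int:
  assumes "finite U" "U \<noteq> {}" "U \<subseteq> V" "\<forall>u\<in>U. c \<in> T u"
    and C: "c \<in> C" "C \<subseteq> N" "attached_at F C (- C) c"
  shows "\<exists>L. induced_pd F (\<Union>u\<in>U. T u \<inter> C) L \<and> (\<forall>Y\<in>set L. card Y \<le> card U * (p + 1))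
     \<and> connected_in F (\<Union>u\<in>U. T u \<inter> C)"
  using assms(1-4)
proof (induction U rule: finite_ne_induct)
  case (singleton u)
  then show ?case using pd_T_Int[of u C] connected_T_Int[of u c C] C by auto
next
  case (insert u U)
  then have u: "u \<in> V" "c \<in> T u" and U: "U \<subseteq> V" "\<forall>u\<in>U. c \<in> T u" by auto
  obtain L where L: "induced_pd F (\<Union>u\<in>U. T u \<inter> C) L" "\<forall>Y\<in>set L. card Y \<le> card U * (p + 1)"
    "connected_in F (\<Union>u\<in>U. T u \<inter> C)" using insert.IH U by blast
  obtain P where P: "induced_pd F (T u \<inter> C) P" "\<forall>Y\<in>set P. card Y \<le> p + 1"
    using pd_T_Int[OF u(1)] by blast
  have con_u: "connected_in F (T u \<inter> C)" using connected_T_Int[OF u C(1,3)] .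
  have meet: "(\<Union>u\<in>U. T u \<inter> C) \<inter> (T u \<inter> C) \<noteq> {}" using insert.hyps(2) U(2) u(2) C(1) by blast
  obtain L' where "induced_pd F ((\<Union>u\<in>U. T u \<inter> C) \<union> (T u \<inter> C)) L'"
     "\<forall>Y\<in>set L'. card Y \<le> card U * (p + 1) + (p + 1)"
    using induced_pd_Un[OF tree_NF _ _ L(3) con_u meet L(1,2) P] by blast
  moreover have "(\<Union>u\<in>insert u U. T u \<inter> C) = (\<Union>u\<in>U. T u \<inter> C) \<union> (T u \<inter> C)" by blast
  moreover have "card (insert u U) * (p + 1) = card U * (p + 1) + (p + 1)" using insert.hyps by simp
  moreover have "connected_in F ((\<Union>u\<in>U. T u \<inter> C) \<union> (T u \<inter> C))"
    using connected_in_Union[of "{\<Union>u\<in>U. T u \<inter> C, T u \<inter> C}" F c] L(3) con_u U(2) u(2) C(1)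
      insert.hyps(2) by auto
  ultimately show ?case by auto
qed

definition owned :: "'b set \<Rightarrow> 'a set \<Rightarrow> 'a set" where
  "owned C S = {v \<in> V. T v \<inter> C \<noteq> {}} - S"

text \<open>The invariant of the recursive construction.\<close>
definition piece :: "'b set \<Rightarrow> 'b \<Rightarrow> 'a set \<Rightarrow> bool" where
  "piece C c S \<longleftrightarrow> C \<subseteq> N \<and> c \<in> C \<and> connected_in F C \<and> S \<subseteq> B c \<and> card S \<le> w \<and>
     (\<forall>v\<in>V. T v \<inter> C \<noteq> {} \<longrightarrow> \<not> T v \<subseteq> C \<longrightarrow> v \<in> S) \<and> attached_at F C (- C) c"

text \<open>A bag \<open>Y\<close> of \<open>Z\<close> stands for the bag \<open>\<Union>(B ` Y)\<close> of the final path decomposition.\<close>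
definition layout :: "'b set \<Rightarrow> 'a set \<Rightarrow> nat \<Rightarrow> 'b set list \<Rightarrow> ('a \<Rightarrow> nat) \<Rightarrow> bool" where
  "layout C S l Z f \<longleftrightarrow> induced_pd F C Z \<and>
     (\<forall>x\<in>C. \<forall>u\<in>B x. \<forall>v\<in>B x. u \<in> owned C S \<longrightarrow> v \<in> owned C S \<longrightarrow> f u \<le> f v + 1) \<and>
     (\<forall>x\<in>C. \<forall>u\<in>B x. u \<in> owned C S \<longrightarrow> B x \<inter> S \<noteq> {} \<longrightarrow> f u = l) \<and>
     (\<forall>u\<in>owned C S. l \<le> f u) \<and>
     (\<forall>Y\<in>set Z. \<forall>i. \<exists>W\<subseteq>Y. card W \<le> w * (p + 1) \<and>
        {v \<in> owned C S. f v = i \<and> (\<exists>x\<in>Y. v \<in> B x)} \<subseteq> \<Union>(B ` W))"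

lemma layoutD:
  assumes "layout C S l Z f"
  shows "induced_pd F C Z"
    "\<And>x u v. x \<in> C \<Longrightarrow> u \<in> B x \<Longrightarrow> v \<in> B x \<Longrightarrow> u \<in> owned C S \<Longrightarrow> v \<in> owned C S \<Longrightarrow>
      f u \<le> f v + 1"
    "\<And>x u. x \<in> C \<Longrightarrow> u \<in> B x \<Longrightarrow> u \<in> owned C S \<Longrightarrow> B x \<inter> S \<noteq> {} \<Longrightarrow> f u = l"
    "\<And>u. u \<in> owned C S \<Longrightarrow> l \<le> f u"
    "\<And>Y i. Y \<in> set Z \<Longrightarrow> \<exists>W\<subseteq>Y. card W \<le> w * (p + 1) \<and>
        {v \<in> owned C S. f v = i \<and> (\<exists>x\<in>Y. v \<in> B x)} \<subseteq> \<Union>(B ` W)"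
  using assms unfolding layout_def by auto

end

locale piece_step = good_td +
  fixes C :: "'b set" and c :: 'b and S :: "'a set"
  assumes piece: "piece C c S"
begin

lemma piece_facts: "C \<subseteq> N" "c \<in> C" "connected_in F C" "S \<subseteq> B c" "card S \<le> w"
  "\<And>v. v \<in> V \<Longrightarrow> T v \<inter> C \<noteq> {} \<Longrightarrow> \<not> T v \<subseteq> C \<Longrightarrow> v \<in> S" "attached_at F C (- C) c"
  using piece unfolding piece_def by blast+

lemma c_in_N: "c \<in> N"
  using piece_facts(1,2) by blast

lemma finite_C: "finite C"
  using piece_facts(1) finite_N by (rule finite_subset)

text \<open>If \<open>S\<close> is empty, one vertex of \<open>B c\<close> is used instead, so that the separators of the
  next level again have at most \<open>w\<close> vertices (see \<open>card_separator_le\<close>).\<close>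
definition seeds :: "'a set" where
  "seeds = (if S \<noteq> {} then S else if B c \<noteq> {} then {SOME v. v \<in> B c} else {})"

lemma seeds_subset_bag: "seeds \<subseteq> B c"
  using piece_facts(4) unfolding seeds_def by (auto intro: someI)

lemma seeds_subset: "seeds \<subseteq> V"
  using seeds_subset_bag bag_subset[OF c_in_N] by blast

lemma finite_seeds: "finite seeds"
  using seeds_subset_bag finite_bag[OF c_in_N] by (rule finite_subset)

lemma card_seeds: "card seeds \<le> w"
  using piece_facts(5) w_pos unfolding seeds_def by auto

lemma seeds_eq: "S \<noteq> {} \<Longrightarrow> seeds = S"
  unfolding seeds_def by simp

lemma seeds_empty: "seeds = {} \<Longrightarrow> B c = {}"
  unfolding seeds_def by (auto split: if_splits)

lemma c_in_T_seed: "u \<in> seeds \<Longrightarrow> c \<in> T u"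
  using seeds_subset_bag c_in_N by blast

definition core :: "'b set" where
  "core = {c} \<union> (\<Union>u\<in>seeds. T u \<inter> C)"

lemma core_subset: "core \<subseteq> C"
  unfolding core_def using piece_facts(2) by blast

lemma c_in_core: "c \<in> core"
  unfolding core_def by blast

lemma connected_core: "connected_in F core"
proof -
  have "connected_in F X \<and> c \<in> X" if X: "X \<in> insert {c} ((\<lambda>u. T u \<inter> C) ` seeds)" for X
  proof (cases "X = {c}")
    case False
    then obtain u where u: "u \<in> seeds" "X = T u \<inter> C" using X by blast
    then show ?thesis
      using connected_T_Int[OF _ c_in_T_seed[OF u(1)] piece_facts(2,7)] seeds_subset
        c_in_T_seed[OF u(1)] piece_facts(2) by blast
  qed (simp add: connected_in_adj)
  then show ?thesis
    using connected_in_Union[of "insert {c} ((\<lambda>u. T u \<inter> C) ` seeds)" F c]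
    unfolding core_def by simp
qed

lemma pd_core: "\<exists>Z. induced_pd F core Z \<and> (\<forall>Y\<in>set Z. card Y \<le> w * (p + 1))"
proof (cases "seeds = {}")
  case True
  have "induced_pd F {c} [{c}]" by (rule induced_pdI) (auto simp: contiguous_def)
  then show ?thesis using True w_pos unfolding core_def by (intro exI[of _ "[{c}]"]) simp
next
  case False
  obtain L where L: "induced_pd F (\<Union>u\<in>seeds. T u \<inter> C) L"
      "\<forall>Y\<in>set L. card Y \<le> card seeds * (p + 1)"
    using pd_UN_T_Int[OF finite_seeds False seeds_subset _ piece_facts(2,1,7)] c_in_T_seed
    by blast
  have "core = (\<Union>u\<in>seeds. T u \<inter> C)"
    unfolding core_def using False c_in_T_seed piece_facts(2) by blast
  moreover have "card seeds * (p + 1) \<le> w * (p + 1)" using mult_le_mono1[OF card_seeds] .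
  ultimately show ?thesis using L le_trans by metis
qed

definition parts :: "'b set set" where
  "parts = component F (C - core) ` (C - core)"

lemma finite_parts: "finite parts"
  unfolding parts_def using finite_C by simp

lemma parts_Un_core: "core \<union> \<Union>parts = C"
  unfolding parts_def using Union_components[of F "C - core"] core_subset by blast

lemma part_facts:
  assumes "D \<in> parts"
  shows "D \<subseteq> C" "D \<inter> core = {}" "D \<subseteq> N" "c \<notin> D" "connected_in F D" "card D < card C"
proof -
  obtain d where d: "d \<in> C - core" "D = component F (C - core) d"
    using assms unfolding parts_def by blast
  then have D: "D \<subseteq> C - core" using component_subset[of F "C - core" d] by simp
  then show "D \<subseteq> C" "D \<inter> core = {}" by blast+
  then show "D \<subseteq> N" using piece_facts(1) by blast
  show "c \<notin> D" using D c_in_core by blast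
  show "connected_in F D" using connected_in_component[OF d(1)] d(2) by simp
  have "D \<subset> C" using D c_in_core piece_facts(2) by blast
  then show "card D < card C" using psubset_card_mono[OF finite_C] by blast
qed

lemma parts_disjoint:
  assumes "D \<in> parts" "D' \<in> parts" "x \<in> D" "x \<in> D'"
  shows "D = D'"
  using components_apart[of D F "C - core" D'] assms unfolding parts_def by blast

lemma part_attached_once:
  assumes "D \<in> parts"
  obtains a b where "a \<in> core" "b \<in> D" "{a, b} \<in> F"
    "\<And>x y. {x, y} \<in> F \<Longrightarrow> x \<in> core \<Longrightarrow> y \<in> D \<Longrightarrow> x = a \<and> y = b"
proof -
  obtain d where d: "d \<in> C - core" "D = component F (C - core) d"
    using assms unfolding parts_def by blast
  have c: "c \<in> C \<inter> core" using piece_facts(2) c_in_core by blast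
  show ?thesis
  proof (rule tree_component_attached_once[OF tree_NF piece_facts(1,3) _ connected_core c d(1)])
    show "core \<subseteq> N" using core_subset piece_facts(1) by blast
    fix a b assume "a \<in> core" "b \<in> component F (C - core) d" "{a, b} \<in> F"
      "\<And>x y. {x, y} \<in> F \<Longrightarrow> x \<in> core \<Longrightarrow> y \<in> component F (C - core) d \<Longrightarrow> x = a \<and> y = b"
    then show thesis using that d(2) by blast
  qed
qed

definition attach :: "'b set \<Rightarrow> 'b" where
  "attach D = (SOME a. \<exists>b. a \<in> core \<and> b \<in> D \<and> {a, b} \<in> F)"

definition entry :: "'b set \<Rightarrow> 'b" where
  "entry D = (SOME b. b \<in> D \<and> {attach D, b} \<in> F)"

lemma attach_entry:
  assumes "D \<in> parts"
  shows "attach D \<in> core" "entry D \<in> D" "{attach D, entry D} \<in> F"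
proof -
  have "\<exists>a b. a \<in> core \<and> b \<in> D \<and> {a, b} \<in> F" by (rule part_attached_once[OF assms]) blast
  then have a: "\<exists>b. attach D \<in> core \<and> b \<in> D \<and> {attach D, b} \<in> F"
    unfolding attach_def by (rule someI_ex)
  then show "attach D \<in> core" by blast
  from a have "\<exists>b. b \<in> D \<and> {attach D, b} \<in> F" by blast
  then have "entry D \<in> D \<and> {attach D, entry D} \<in> F" unfolding entry_def by (rule someI_ex)
  then show "entry D \<in> D" "{attach D, entry D} \<in> F" by blast+
qed

lemma edge_into_part:
  assumes D: "D \<in> parts" and e: "{x, y} \<in> F" "y \<in> D" "x \<notin> D"
  shows "x = attach D \<and> y = entry D"
proof -
  have "y \<in> C" using part_facts(1)[OF D] e(2) by blast
  have "x \<in> C"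
  proof (rule ccontr)
    assume "x \<notin> C"
    moreover have "{y, x} \<in> F" using e(1) by (simp add: insert_commute)
    ultimately have "y = c" using piece_facts(7) \<open>y \<in> C\<close> unfolding attached_at_def by blast
    then show False using part_facts(4)[OF D] e(2) by blast
  qed
  have "x \<in> core"
  proof (rule ccontr)
    assume "x \<notin> core"
    obtain d where d: "D = component F (C - core) d" using D unfolding parts_def by blast
    have "{y, x} \<in> F" using e(1) by (simp add: insert_commute)
    then have "x \<in> D" using component_closed[of y x F "C - core" d] e(2) \<open>x \<in> C\<close> \<open>x \<notin> core\<close> d
      by blast
    then show False using e(3) by blast
  qed
  show ?thesis
  proof (rule part_attached_once[OF D])
    fix a b assume ab: "\<And>x y. {x, y} \<in> F \<Longrightarrow> x \<in> core \<Longrightarrow> y \<in> D \<Longrightarrow> x = a \<and> y = b"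
    show ?thesis
      using ab[OF e(1) \<open>x \<in> core\<close> e(2)] ab[OF attach_entry(3)[OF D] attach_entry(1,2)[OF D]]
      by simp
  qed
qed

definition separator :: "'b set \<Rightarrow> 'a set" where
  "separator D = {v \<in> V. T v \<inter> D \<noteq> {} \<and> \<not> T v \<subseteq> D}"

lemma separator_spans_edge:
  assumes D: "D \<in> parts" and v: "v \<in> separator D"
  shows "entry D \<in> T v" "attach D \<in> T v"
proof -
  from v obtain x y where v': "v \<in> V" "x \<in> T v" "x \<in> D" "y \<in> T v" "y \<notin> D"
    unfolding separator_def by blast
  have "(x, y) \<in> (adj F (T v))\<^sup>*" using connected_T[OF v'(1)] v' unfolding connected_in_adj by blast
  from adj_rtrancl_exit[OF this v'(3)]
  consider "(x, y) \<in> (adj F (T v \<inter> D))\<^sup>*" | a b where "{a, b} \<in> F" "a \<in> T v \<inter> D" "b \<in> T v - D"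
    by blast
  then have "entry D \<in> T v \<and> attach D \<in> T v"
  proof cases
    case 1
    then show ?thesis using adj_rtrancl_endpoints[OF 1] v' by blast
  next
    case 2
    have "{b, a} \<in> F" using 2(1) by (simp add: insert_commute)
    then have "b = attach D \<and> a = entry D" using edge_into_part[OF D] 2 by blast
    then show ?thesis using 2 by blast
  qed
  then show "entry D \<in> T v" "attach D \<in> T v" by blast+
qed

text \<open>Here the choice of \<open>seeds\<close> pays off: \<open>B (attach D)\<close> contains a seed that does
  not reach into \<open>D\<close>, unless \<open>B c\<close> and hence the separator is empty.\<close>
lemma card_separator_le:
  assumes D: "D \<in> parts"
  shows "card (separator D) \<le> w"
proof (cases "\<exists>u\<in>seeds. attach D \<in> T u")
  case True
  then obtain u where u: "u \<in> seeds" "attach D \<in> T u" by blast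
  then have a_N: "attach D \<in> N" by blast
  have "u \<notin> separator D"
  proof
    assume "u \<in> separator D"
    then have "entry D \<in> T u" using separator_spans_edge(1)[OF D] by blast
    moreover have "entry D \<in> C" using attach_entry(2)[OF D] part_facts(1)[OF D] by blast
    ultimately have "entry D \<in> core" using u(1) unfolding core_def by blast
    then show False using attach_entry(2)[OF D] part_facts(2)[OF D] by blast
  qed
  then have "separator D \<subseteq> B (attach D) - {u}" using separator_spans_edge(2)[OF D] by blast
  then have "card (separator D) \<le> card (B (attach D) - {u})"
    using card_mono[OF finite_Diff[OF finite_bag[OF a_N]]] by blast
  also have "\<dots> = card (B (attach D)) - 1" using u(2) by simp
  also have "\<dots> \<le> w" using card_bag[OF a_N] by simp
  finally show ?thesis .
next
  case False
  then have "attach D = c" using attach_entry(1)[OF D] unfolding core_def by auto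
  then have "seeds = {}" using False c_in_T_seed by auto
  then have "B (attach D) = {}" using seeds_empty \<open>attach D = c\<close> by simp
  then have "separator D = {}" using separator_spans_edge(2)[OF D] by blast
  then show ?thesis by simp
qed

lemma piece_part:
  assumes D: "D \<in> parts"
  shows "piece D (entry D) (separator D)"
  unfolding piece_def
proof (intro conjI ballI impI)
  show "D \<subseteq> N" "connected_in F D" using part_facts[OF D] by blast+
  show "entry D \<in> D" using attach_entry(2)[OF D] .
  show "card (separator D) \<le> w" using card_separator_le[OF D] .
  show "separator D \<subseteq> B (entry D)" using separator_spans_edge(1)[OF D] by blast
  show "v \<in> separator D" if "v \<in> V" "T v \<inter> D \<noteq> {}" "\<not> T v \<subseteq> D" for v
    using that unfolding separator_def by blast
  show "attached_at F D (- D) (entry D)"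
    unfolding attached_at_def
  proof (intro allI impI)
    fix x y assume "{x, y} \<in> F" "x \<in> D" "y \<in> - D"
    then have "{y, x} \<in> F" "y \<notin> D" by (auto simp: insert_commute)
    then show "x = entry D" using edge_into_part[OF D _ \<open>x \<in> D\<close>] by blast
  qed
qed

definition core_owned :: "'a set" where
  "core_owned = {v \<in> owned C S. T v \<inter> core \<noteq> {}}"

lemma owned_iff: "v \<in> owned X Y \<longleftrightarrow> v \<in> V \<and> T v \<inter> X \<noteq> {} \<and> v \<notin> Y"
  unfolding owned_def by blast

lemma owned_part_if_not_core:
  assumes v: "v \<in> owned C S" "v \<notin> core_owned"
  shows "\<exists>D\<in>parts. v \<in> owned D (separator D) \<and> T v \<subseteq> D"
proof -
  have vV: "v \<in> V" and vC: "T v \<inter> C \<noteq> {}" and vS: "v \<notin> S" using v(1) unfolding owned_iff by blast+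
  have "T v \<subseteq> C - core"
    using piece_facts(6)[OF vV vC] vS v unfolding core_owned_def by blast
  obtain x where x: "x \<in> T v" using T_nonempty[OF vV] by blast
  then have xK: "x \<in> C - core" using \<open>T v \<subseteq> C - core\<close> by blast
  let ?D = "component F (C - core) x"
  have D: "?D \<in> parts" unfolding parts_def using xK by blast
  have TD: "T v \<subseteq> ?D"
  proof
    fix y assume y: "y \<in> T v"
    have "(x, y) \<in> (adj F (T v))\<^sup>*" using connected_T[OF vV] x y unfolding connected_in_adj by blast
    then have "(x, y) \<in> (adj F (C - core))\<^sup>*"
      using adj_rtrancl_mono[OF _ \<open>T v \<subseteq> C - core\<close> order_refl] by blast
    then show "y \<in> ?D" unfolding component_def using y \<open>T v \<subseteq> C - core\<close> by blast
  qed
  then have "v \<in> owned ?D (separator ?D)" unfolding owned_iff separator_def using vV x by blast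
  then show ?thesis using D TD by blast
qed

lemma owned_part:
  assumes D: "D \<in> parts" and v: "v \<in> owned D (separator D)"
  shows "T v \<subseteq> D" "v \<in> owned C S" "v \<notin> core_owned"
proof -
  have vV: "v \<in> V" and vD: "T v \<inter> D \<noteq> {}" and vS: "v \<notin> separator D"
    using v unfolding owned_iff by blast+
  show TD: "T v \<subseteq> D" using vS vV vD unfolding separator_def by blast
  have "v \<notin> S" using TD part_facts(4)[OF D] piece_facts(4) c_in_N by blast
  then show "v \<in> owned C S" unfolding owned_iff using vV vD part_facts(1)[OF D] by blast
  show "v \<notin> core_owned" using TD part_facts(2)[OF D] unfolding core_owned_def by blast
qed

lemma owned_part_unique:
  assumes "D \<in> parts" "D' \<in> parts" "v \<in> owned D (separator D)" "v \<in> owned D' (separator D')"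
  shows "D = D'"
proof -
  have "v \<in> V" using assms(3) unfolding owned_iff by blast
  then obtain x where "x \<in> T v" using T_nonempty by blast
  then show ?thesis
    using owned_part(1)[OF assms(1,3)] owned_part(1)[OF assms(2,4)] parts_disjoint assms(1,2) by blast
qed

lemma core_owned_if_in_core_bag:
  "x \<in> core \<Longrightarrow> v \<in> B x \<Longrightarrow> v \<in> owned C S \<Longrightarrow> v \<in> core_owned"
  using core_subset piece_facts(1) unfolding core_owned_def by blast

lemma owned_in_part_bag:
  assumes D: "D \<in> parts" and x: "x \<in> D" "v \<in> B x" and v: "v \<in> owned C S"
  shows "(v \<in> core_owned \<and> v \<in> separator D) \<or> v \<in> owned D (separator D)"
proof (cases "v \<in> core_owned")
  case True
  then have "\<not> T v \<subseteq> D" using part_facts(2)[OF D] unfolding core_owned_def by blast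
  moreover have "T v \<inter> D \<noteq> {}" using part_facts(3)[OF D] x by blast
  ultimately show ?thesis using True v unfolding separator_def owned_iff by blast
next
  case False
  obtain D' where D': "D' \<in> parts" "v \<in> owned D' (separator D')" "T v \<subseteq> D'"
    using owned_part_if_not_core[OF v False] by blast
  have "x \<in> D'" using D'(3) part_facts(3)[OF D] x by blast
  then show ?thesis using parts_disjoint[OF D'(1) D] x(1) D'(2) by blast
qed

lemma in_core_if_bag_meets_S: "s \<in> S \<Longrightarrow> x \<in> C \<Longrightarrow> s \<in> B x \<Longrightarrow> x \<in> core"
  using seeds_eq piece_facts(1) unfolding core_def by blast

end

locale piece_combine = piece_step +
  fixes l :: nat and ZD :: "'b set \<Rightarrow> 'b set list" and fD :: "'b set \<Rightarrow> 'a \<Rightarrow> nat"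
  assumes layout_parts: "D \<in> parts \<Longrightarrow> layout D (separator D) (Suc l) (ZD D) (fD D)"
begin

definition layer :: "'a \<Rightarrow> nat" where
  "layer v = (if v \<in> core_owned then l else fD (THE D. D \<in> parts \<and> v \<in> owned D (separator D)) v)"

lemma layer_core: "v \<in> core_owned \<Longrightarrow> layer v = l"
  unfolding layer_def by simp

lemma layer_part:
  assumes D: "D \<in> parts" and v: "v \<in> owned D (separator D)"
  shows "layer v = fD D v"
proof -
  have "(THE D'. D' \<in> parts \<and> v \<in> owned D' (separator D')) = D"
  proof (rule the_equality)
    show "D' = D" if "D' \<in> parts \<and> v \<in> owned D' (separator D')" for D'
      using owned_part_unique[of D' D v] that D v by blast
  qed (use D v in blast)
  then show ?thesis unfolding layer_def using owned_part(3)[OF D v] by simp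
qed

lemma layer_ge:
  assumes "u \<in> owned C S"
  shows "l \<le> layer u"
proof (cases "u \<in> core_owned")
  case False
  then obtain D where D: "D \<in> parts" "u \<in> owned D (separator D)"
    using owned_part_if_not_core[OF assms] by blast
  have "Suc l \<le> fD D u" using layoutD(4)[OF layout_parts[OF D(1)] D(2)] .
  then show ?thesis using layer_part[OF D] by simp
qed (simp add: layer_core)

lemma layer_near_S:
  assumes "x \<in> C" "u \<in> B x" "u \<in> owned C S" "B x \<inter> S \<noteq> {}"
  shows "layer u = l"
proof -
  obtain s where "s \<in> S" "s \<in> B x" using assms(4) by blast
  then have "x \<in> core" using in_core_if_bag_meets_S assms(1) by blast
  then show ?thesis using core_owned_if_in_core_bag[OF _ assms(2,3)] layer_core by blast
qed

lemma layer_adjacent: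
  assumes x: "x \<in> C" and u: "u \<in> B x" "u \<in> owned C S" and v: "v \<in> B x" "v \<in> owned C S"
  shows "layer u \<le> layer v + 1"
proof (cases "x \<in> core")
  case True
  then show ?thesis using core_owned_if_in_core_bag u v layer_core by simp
next
  case False
  let ?D = "component F (C - core) x"
  have D: "?D \<in> parts" and xD: "x \<in> ?D"
    unfolding parts_def using x False component_self[of x "C - core" F] by blast+
  note L = layoutD[OF layout_parts[OF D]]
  from owned_in_part_bag[OF D xD u] owned_in_part_bag[OF D xD v]
  consider "u \<in> core_owned" "v \<in> core_owned"
    | "u \<in> core_owned" "u \<in> separator ?D" "v \<in> owned ?D (separator ?D)"
    | "u \<in> owned ?D (separator ?D)" "v \<in> core_owned" "v \<in> separator ?D"
    | "u \<in> owned ?D (separator ?D)" "v \<in> owned ?D (separator ?D)"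
    by blast
  then show ?thesis
  proof cases
    case 1 then show ?thesis using layer_core by simp
  next
    case 2
    then have "fD ?D v = Suc l" using L(3)[OF xD v(1) 2(3)] u(1) by blast
    then show ?thesis using layer_core[OF 2(1)] layer_part[OF D 2(3)] by simp
  next
    case 3
    then have "fD ?D u = Suc l" using L(3)[OF xD u(1) 3(1)] v(1) by blast
    then show ?thesis using layer_core[OF 3(2)] layer_part[OF D 3(1)] by simp
  next
    case 4
    then show ?thesis using L(2)[OF xD u(1) v(1) 4] layer_part[OF D] by simp
  qed
qed

text \<open>A vertex of layer \<open>l\<close> seen from \<open>Q\<close> lies in the separator of \<open>D\<close>, hence in
  \<open>B (attach D)\<close>.\<close>
lemma core_layer_covered:
  assumes D: "D \<in> parts" and H: "H \<subseteq> core" "attach D \<in> H" and Q: "Q \<in> set (ZD D)"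
  shows "{v \<in> owned C S. layer v = l \<and> (\<exists>x\<in>H \<union> Q. v \<in> B x)} \<subseteq> \<Union>(B ` H)"
proof
  fix v assume "v \<in> {v \<in> owned C S. layer v = l \<and> (\<exists>x\<in>H \<union> Q. v \<in> B x)}"
  then obtain x where v: "v \<in> owned C S" "layer v = l" and x: "x \<in> H \<union> Q" "v \<in> B x" by blast
  show "v \<in> \<Union>(B ` H)"
  proof (cases "x \<in> H")
    case False
    then have xD: "x \<in> D" using x(1) induced_pdD(2)[OF layoutD(1)[OF layout_parts[OF D]] Q] by blast
    from owned_in_part_bag[OF D xD x(2) v(1)]
    show ?thesis
    proof
      assume "v \<in> owned D (separator D)"
      then have "Suc l \<le> layer v" using layoutD(4)[OF layout_parts[OF D]] layer_part[OF D] by simp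
      then show ?thesis using v(2) by simp
    qed (use separator_spans_edge(2)[OF D] H(2) in blast)
  qed (use x in blast)
qed

lemma part_layer_covered:
  assumes D: "D \<in> parts" and H: "H \<subseteq> core" and Q: "Q \<in> set (ZD D)" and i: "i \<noteq> l"
  shows "\<exists>W\<subseteq>H \<union> Q. card W \<le> w * (p + 1) \<and>
    {v \<in> owned C S. layer v = i \<and> (\<exists>x\<in>H \<union> Q. v \<in> B x)} \<subseteq> \<Union>(B ` W)"
proof -
  note L = layoutD[OF layout_parts[OF D]]
  obtain W where W: "W \<subseteq> Q" "card W \<le> w * (p + 1)"
    "{v \<in> owned D (separator D). fD D v = i \<and> (\<exists>x\<in>Q. v \<in> B x)} \<subseteq> \<Union>(B ` W)"
    using L(5)[OF Q, of i] by blast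
  have "v \<in> \<Union>(B ` W)" if v: "v \<in> owned C S" "layer v = i" and x: "x \<in> H \<union> Q" "v \<in> B x" for v x
  proof -
    have "v \<notin> core_owned" using layer_core v(2) i by auto
    then obtain D' where D': "D' \<in> parts" "v \<in> owned D' (separator D')" "T v \<subseteq> D'"
      using owned_part_if_not_core[OF v(1)] by blast
    have "x \<in> N" using x(1) H piece_facts(1) core_subset induced_pdD(2)[OF L(1) Q] part_facts(3)[OF D]
      by blast
    then have "x \<in> D'" using D'(3) x(2) by blast
    then have "x \<in> Q" using x(1) H part_facts(2)[OF D'(1)] by blast
    then have "D' = D" using parts_disjoint[OF D'(1) D] \<open>x \<in> D'\<close> induced_pdD(2)[OF L(1) Q] by blast
    then show ?thesis using W(3) D'(2) layer_part[OF D] v(2) \<open>x \<in> Q\<close> x(2) by auto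
  qed
  then show ?thesis using W(1,2) by blast
qed

lemma spliced_bag_covered:
  assumes D: "D \<in> parts" and H: "H \<subseteq> core" "attach D \<in> H" "card H \<le> w * (p + 1)"
    and Q: "Q \<in> set (ZD D)"
  shows "\<exists>W\<subseteq>H \<union> Q. card W \<le> w * (p + 1) \<and>
    {v \<in> owned C S. layer v = i \<and> (\<exists>x\<in>H \<union> Q. v \<in> B x)} \<subseteq> \<Union>(B ` W)"
proof (cases "i = l")
  case True
  then show ?thesis using core_layer_covered[OF D H(1,2) Q] H(3) by blast
next
  case False
  then show ?thesis using part_layer_covered[OF D H(1) Q] by blast
qed

lemma layout_combined: "\<exists>Z. layout C S l Z layer"
proof -
  obtain ZR where ZR: "induced_pd F core ZR" "\<forall>Y\<in>set ZR. card Y \<le> w * (p + 1)"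
    using pd_core by blast
  have attached: "induced_pd F D (ZD D) \<and> D \<inter> core = {} \<and> attach D \<in> core \<and>
      attached_at F core D (attach D)" if D: "D \<in> parts" for D
    using layoutD(1)[OF layout_parts[OF D]] part_facts(2)[OF D] attach_entry(1)[OF D]
      edge_into_part[OF D] unfolding attached_at_def by blast
  have apart: "D \<inter> D' = {} \<and> (\<forall>x\<in>D'. \<forall>y\<in>D. {x, y} \<notin> F)"
    if "D \<in> parts" "D' \<in> parts" "D \<noteq> D'" for D D'
    using that unfolding parts_def by (rule components_apart)
  from induced_pd_splice_all[OF ZR(1) finite_parts attached apart]
  obtain Z where Z: "induced_pd F (core \<union> \<Union>parts) Z" "set Z \<subseteq> set ZR \<union>
      {H \<union> Q | D H Q. D \<in> parts \<and> H \<in> set ZR \<and> Q \<in> set (ZD D) \<and> attach D \<in> H}"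
    by blast
  have cover: "\<exists>W\<subseteq>Y. card W \<le> w * (p + 1) \<and>
      {v \<in> owned C S. layer v = i \<and> (\<exists>x\<in>Y. v \<in> B x)} \<subseteq> \<Union>(B ` W)" if Y: "Y \<in> set Z" for Y i
  proof -
    from Z(2) Y consider "Y \<in> set ZR"
      | D H Q where "D \<in> parts" "H \<in> set ZR" "Q \<in> set (ZD D)" "attach D \<in> H" "Y = H \<union> Q"
      by blast
    then show ?thesis
    proof cases
      case 1
      then show ?thesis using ZR(2) by blast
    next
      case 2
      then show ?thesis
        using spliced_bag_covered[OF 2(1) induced_pdD(2)[OF ZR(1) 2(2)] 2(4) _ 2(3)] ZR(2) by blast
    qed
  qed
  have "layout C S l Z layer"
    unfolding layout_def using Z(1) parts_Un_core layer_adjacent layer_near_S layer_ge cover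
    by auto
  then show ?thesis by blast
qed

end

context good_td
begin

lemma layout_exists: "piece C c S \<Longrightarrow> \<exists>Z f. layout C S l Z f"
proof (induction "card C" arbitrary: C c S l rule: less_induct)
  case less
  interpret piece_step V E N F B w p C c S
    using graph w_pos good less.prems by unfold_locales
  have "\<forall>D\<in>parts. \<exists>Z f. layout D (separator D) (Suc l) Z f"
    using less.hyps part_facts(6) piece_part by blast
  then obtain ZD fD where "\<And>D. D \<in> parts \<Longrightarrow> layout D (separator D) (Suc l) (ZD D) (fD D)"
    by metis
  then interpret piece_combine V E N F B w p C c S l ZD fD
    by unfold_locales
  show ?case using layout_combined by blast
qed

lemma piece_root:
  assumes "c \<in> N"
  shows "piece N c {}"
proof -
  have "attached_at F N (- N) c" using edge_nodes unfolding attached_at_def by blast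
  then show ?thesis using assms tree_NF unfolding piece_def tree_def by auto
qed

lemma owned_root: "owned N {} = V"
  unfolding owned_def using T_nonempty by auto

lemma path_decomposition_bags:
  assumes Z: "induced_pd F N Z"
  shows "path_decomposition V E (map (\<lambda>Y. \<Union>(B ` Y)) Z)"
  unfolding path_decomposition_def
proof (intro conjI ballI allI impI)
  let ?Ps = "map (\<lambda>Y. \<Union>(B ` Y)) Z"
  have ZN: "\<And>Y. Y \<in> set Z \<Longrightarrow> Y \<subseteq> N" using induced_pdD(2)[OF Z] .
  have mem: "v \<in> ?Ps ! i \<longleftrightarrow> Z ! i \<inter> T v \<noteq> {}" if "i < length Z" for v i
    using ZN[OF nth_mem[OF that]] that by auto
  show "?Ps \<noteq> []" using induced_pdD(1)[OF Z] by simp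
  show "X \<subseteq> V" if "X \<in> set ?Ps" for X using that ZN bag_subset by auto
  show "\<exists>X\<in>set ?Ps. e \<subseteq> X" if e: "e \<in> E" for e
  proof -
    obtain x where x: "x \<in> N" "e \<subseteq> B x" using edge_in_bag[OF e] by blast
    obtain Y where "Y \<in> set Z" "x \<in> Y" using induced_pdD(3)[OF Z x(1)] by blast
    then show ?thesis using x(2) by auto
  qed
  show "\<exists>X\<in>set ?Ps. v \<in> X" if v: "v \<in> V" for v
  proof -
    obtain x where x: "x \<in> T v" using T_nonempty[OF v] by blast
    obtain Y where "Y \<in> set Z" "x \<in> Y" using induced_pdD(3)[OF Z] x by blast
    then show ?thesis using x by auto
  qed
  fix v i j k assume v: "v \<in> V" and ijk: "i \<le> j \<and> j \<le> k \<and> k < length ?Ps \<and> v \<in> ?Ps ! i \<and> v \<in> ?Ps ! k"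
  then have "Z ! j \<inter> T v \<noteq> {}"
    using induced_pd_connected_contiguous[OF Z _ connected_T[OF v], of i j k] mem by auto
  then show "v \<in> ?Ps ! j" using mem ijk by auto
qed

lemma layering_layout:
  assumes "layout N {} l Z f"
  shows "layering E f"
  unfolding layering_def
proof (intro allI impI)
  fix u v assume "{u, v} \<in> E"
  then obtain x where x: "x \<in> N" "u \<in> B x" "v \<in> B x" using edge_in_bag by blast
  then have "u \<in> owned N {}" "v \<in> owned N {}" using bag_subset owned_root by blast+
  then show "f u \<le> f v + 1 \<and> f v \<le> f u + 1" using layoutD(2)[OF assms] x by blast
qed

lemma card_layer_in_bag:
  assumes L: "layout N {} l Z f" and Y: "Y \<in> set Z"
  shows "card {v \<in> \<Union>(B ` Y). f v = i} \<le> w * (p + 1) * (w + 1)"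
proof -
  obtain W where W: "W \<subseteq> Y" "card W \<le> w * (p + 1)"
    "{v \<in> V. f v = i \<and> (\<exists>x\<in>Y. v \<in> B x)} \<subseteq> \<Union>(B ` W)"
    using layoutD(5)[OF L Y, of i] unfolding owned_root by blast
  have YN: "Y \<subseteq> N" using induced_pdD(2)[OF layoutD(1)[OF L] Y] .
  then have WN: "W \<subseteq> N" using W(1) by blast
  then have finW: "finite W" using finite_N by (rule finite_subset)
  have "v \<in> V" if "v \<in> B x" "x \<in> Y" for v x using that YN bag_subset by blast
  then have "{v \<in> \<Union>(B ` Y). f v = i} \<subseteq> \<Union>(B ` W)" using W(3) by blast
  then have "card {v \<in> \<Union>(B ` Y). f v = i} \<le> card (\<Union>(B ` W))"
    using finW WN finite_bag by (intro card_mono) auto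
  also have "\<dots> \<le> (\<Sum>x\<in>W. card (B x))" using card_UN_le[OF finW] by simp
  also have "\<dots> \<le> card W * (w + 1)"
    using sum_bounded_above[of W "\<lambda>x. card (B x)" "w + 1"] WN card_bag by auto
  also have "\<dots> \<le> w * (p + 1) * (w + 1)" using mult_le_mono1[OF W(2)] .
  finally show ?thesis .
qed

theorem layered_pathwidth_bound: "layered_pathwidth_le V E (w * (p + 1) * (w + 1))"
proof -
  obtain c where "c \<in> N" using tree_NF unfolding tree_def by blast
  then obtain Z f where L: "layout N {} 0 Z f" using layout_exists piece_root by blast
  have "\<forall>X\<in>set (map (\<lambda>Y. \<Union>(B ` Y)) Z). \<forall>i. card {v \<in> X. f v = i} \<le> w * (p + 1) * (w + 1)"
    using card_layer_in_bag[OF L] by auto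
  then show ?thesis
    unfolding layered_pathwidth_le_def
    using path_decomposition_bags[OF layoutD(1)[OF L]] layering_layout[OF L] by blast
qed

end

theorem lemma10:
  fixes V :: "'a set" and E :: "'a set set"
    and N :: "'b set" and F :: "'b set set" and B :: "'b \<Rightarrow> 'a set"
    and w p :: nat
  assumes "graph V E"
    and "w \<ge> 1"
    and "good_tree_decomposition w p V E N F B"
  shows "layered_pathwidth_le V E (w * (p + 1) * (w + 1))"
proof -
  interpret good_td V E N F B w p using assms by unfold_locales
  show ?thesis by (rule layered_pathwidth_bound)
qed

end
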